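(* Let $F\in\mathcal S^\sharp_d$ with $d>2$. Let $f_0$ be a twist function with $0\le\mathrm{lexp}(f_0)\le 1/d$, and let $S_1,\dots,S_k$ be shifts. Then for $j=1,\dots,k$ the functions $S_jT^\flat S_{j-1}\cdots T^\flat S_1(f_0)$ are well defined and $\ell_j:=\mathrm{lexp}(S_jT^\flat S_{j-1}\cdots T^\flat S_1(f_0))=\deg S_j$. In particular $\ell_j>1/d$ for all $j=1,\dots,k$.
   Context: The extended Selberg class $\mathcal{S}^\sharp$ consists of the not identically zero functions $F(s)=\sum_{n\ge1}a(n)n^{-s}$, absolutely convergent for $\Re s>1$, such that $(s-1)^mF(s)$ is entire of finite order for some integer $m\ge0$, and satisfying a functional equation $\Phi(s)=\omega\overline{\Phi}(1-s)$ with $\Phi(s)=Q^s\prod_{j=1}^r\Gamma(\lambda_js+\mu_j)F(s)$, $\overline{\Phi}(s)=\overline{\Phi(\bar s)}$, $Q>0$, $\lambda_j>0$, $\Re\mu_j\ge0$, $|\omega|=1$. Degree $d=2\sum\lambda_j$, conductor $q_F=(2\pi)^dQ^2\prod\lambda_j^{2\lambda_j}$; $\mathcal S^\sharp_d$ = functions of degree $d$. A twist function is $f(\xi)=\sum_{j=0}^N\alpha_j\xi^{\kappa_j}$, $0\le\kappa_N<\dots<\kappa_0$, real $\alpha_j\ne0$; $\mathrm{lexp}(f)=\kappa_0$. A shift is an operator $S(f)=f+P$ with $P\in\mathbb Z[\xi]$, $\deg P\ge1$; $\deg S:=\deg P$. The operator $T^\flat$ (relative to $F$) is defined on twist functions $f$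 with $\kappa_0=\mathrm{lexp}(f)>1/d$: if $\alpha_0>0$, let $\Phi(z,\xi)=z^{1/d}-2\pi f(qz/\xi)$, $q=q_F(2\pi d)^{-d}$; for large $\xi$ let $x_0(\xi)$ be the unique real positive critical point of $z\mapsto\Phi(z,\xi)$ (in a suitable region); $\frac1{2\pi}\Phi(x_0(\xi),\xi)$ has an expansion $\xi^{\kappa_0^*}\sum_{\omega\in\mathcal D_f}A_\omega\xi^{-\omega^*}$, where $\kappa_0^*=\kappa_0/(d\kappa_0-1)$, $\omega^*=\omega/(d\kappa_0-1)$, $\mathcal D_f$ = nonnegative integer combinations of $\kappa_0-\kappa_j$, $j=1,\dots,N$, and the leading coefficient $A_0\neq0$; $T^\flat(f)$ is the finite part of this sum with $\omega\le\kappa_0$. If $\alpha_0<0$, $T^\flat(f)=-T^\flat(-f)$. Thus $\mathrm{lexp}(T^\flat(f))=\kappa_0/(d\kappa_0-1)$. *)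

theory Defs
  imports "HOL-Analysis.Analysis" "HOL-Library.Landau_Symbols"
          "HOL-Computational_Algebra.Polynomial"
begin

text \<open>F is given as a function on the complex plane (its value at s = 1 is irrelevant),
  a its Dirichlet coefficients (a n for n \<ge> 1), and Q, r, lam, mu, w the data of
  the functional equation with Gamma factors Gamma(lam j * s + mu j), j < r.\<close>

definition ext_selberg ::
  "(nat \<Rightarrow> complex) \<Rightarrow> (complex \<Rightarrow> complex) \<Rightarrow> real \<Rightarrow> nat \<Rightarrow> (nat \<Rightarrow> real)
    \<Rightarrow> (nat \<Rightarrow> complex) \<Rightarrow> complex \<Rightarrow> bool" where
  "ext_selberg a F Q r lam mu w \<longleftrightarrow>
     (\<exists>s. s \<noteq> 1 \<and> F s \<noteq> 0) \<and>
     (\<forall>s. Re s > 1 \<longrightarrow>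
        summable (\<lambda>n. norm (a (Suc n) / of_nat (Suc n) powr s)) \<and>
        F s = (\<Sum>n. a (Suc n) / of_nat (Suc n) powr s)) \<and>
     (\<exists>m::nat. \<exists>G. G holomorphic_on UNIV \<and>
        (\<exists>A \<rho>. \<forall>s. norm (G s) \<le> A * exp (norm s powr \<rho>)) \<and>
        (\<forall>s. s \<noteq> 1 \<longrightarrow> G s = (s - 1) ^ m * F s)) \<and>
     Q > 0 \<and> (\<forall>j<r. lam j > 0 \<and> Re (mu j) \<ge> 0) \<and> norm w = 1 \<and>
     (\<forall>s. s \<noteq> 0 \<and> s \<noteq> 1 \<and>
        (\<forall>j<r. complex_of_real (lam j) * s + mu j \<notin> \<int>\<^sub>\<le>\<^sub>0 \<and>
               complex_of_real (lam j) * (1 - s) + cnj (mu j) \<notin> \<int>\<^sub>\<le>\<^sub>0) \<longrightarrow>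
        complex_of_real Q powr s * (\<Prod>j<r. Gamma (complex_of_real (lam j) * s + mu j)) * F s
        = w * (complex_of_real Q powr (1 - s) *
               (\<Prod>j<r. Gamma (complex_of_real (lam j) * (1 - s) + cnj (mu j))) *
               cnj (F (cnj (1 - s)))))"

definition sel_degree :: "nat \<Rightarrow> (nat \<Rightarrow> real) \<Rightarrow> real" where
  "sel_degree r lam = 2 * (\<Sum>j<r. lam j)"

definition sel_conductor :: "real \<Rightarrow> nat \<Rightarrow> (nat \<Rightarrow> real) \<Rightarrow> real" where
  "sel_conductor Q r lam =
     (2 * pi) powr (sel_degree r lam) * Q ^ 2 * (\<Prod>j<r. lam j powr (2 * lam j))"

definition sel_q :: "real \<Rightarrow> nat \<Rightarrow> (nat \<Rightarrow> real) \<Rightarrow> real" where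
  "sel_q Q r lam = sel_conductor Q r lam * (2 * pi * sel_degree r lam) powr (- sel_degree r lam)"

text \<open>A twist function sum_j alpha_j xi^kappa_j is represented by its coefficient map
  c : exponent \<mapsto> coefficient, with finite nonempty support contained in [0, \<infinity>).\<close>

definition tw_supp :: "(real \<Rightarrow> real) \<Rightarrow> real set" where
  "tw_supp c = {\<kappa>. c \<kappa> \<noteq> 0}"

definition is_twist :: "(real \<Rightarrow> real) \<Rightarrow> bool" where
  "is_twist c \<longleftrightarrow> finite (tw_supp c) \<and> tw_supp c \<noteq> {} \<and> (\<forall>\<kappa>\<in>tw_supp c. 0 \<le> \<kappa>)"

definition lexp :: "(real \<Rightarrow> real) \<Rightarrow> real" where
  "lexp c = Max (tw_supp c)"

definition tw_eval :: "(real \<Rightarrow> real) \<Rightarrow> real \<Rightarrow> real" where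
  "tw_eval c \<xi> = (\<Sum>\<kappa>\<in>tw_supp c. c \<kappa> * \<xi> powr \<kappa>)"

text \<open>The shift S(f) = f + P, P an integer polynomial (of degree \<ge> 1).\<close>
definition shift :: "int poly \<Rightarrow> (real \<Rightarrow> real) \<Rightarrow> (real \<Rightarrow> real)" where
  "shift P c = (\<lambda>\<kappa>. c \<kappa> + (if \<kappa> \<in> \<nat> then real_of_int (coeff P (nat \<lfloor>\<kappa>\<rfloor>)) else 0))"

definition Dset :: "(real \<Rightarrow> real) \<Rightarrow> real set" where
  "Dset c = {\<omega>. \<exists>n :: real \<Rightarrow> nat.
     \<omega> = (\<Sum>\<kappa>\<in>tw_supp c - {lexp c}. real (n \<kappa>) * (lexp c - \<kappa>))}"

text \<open>crit_expansion d q f A: for large xi, x0(xi) is the unique positive critical point of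
  z \<mapsto> Phi(z,xi) = z^(1/d) - 2 pi f(q z / xi) in a region q z / xi \<ge> R, and
  (1/2pi) Phi(x0(xi),xi) has the asymptotic expansion
  xi^(kappa0*) sum_{omega in D_f} A_omega xi^(-omega*), with A_0 \<noteq> 0
  (asymptotic in the sense that truncating at omega \<le> W leaves an error
  o(xi^((kappa0 - W)/(d kappa0 - 1))) for every W).\<close>
definition crit_expansion :: "real \<Rightarrow> real \<Rightarrow> (real \<Rightarrow> real) \<Rightarrow> (real \<Rightarrow> real) \<Rightarrow> bool" where
  "crit_expansion d q f A \<longleftrightarrow>
     (let \<kappa>0 = lexp f; e = d * \<kappa>0 - 1;
          Phi = (\<lambda>z \<xi>. z powr (1 / d) - 2 * pi * tw_eval f (q * z / \<xi>))
      in (\<forall>\<omega>. \<omega> \<notin> Dset f \<longrightarrow> A \<omega> = 0) \<and> A 0 \<noteq> 0 \<and>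
         (\<exists>R x0.
            (\<forall>\<^sub>F \<xi> in at_top. 0 < x0 \<xi> \<and> R \<le> q * x0 \<xi> / \<xi> \<and>
               ((\<lambda>z. Phi z \<xi>) has_real_derivative 0) (at (x0 \<xi>)) \<and>
               (\<forall>z>0. R \<le> q * z / \<xi> \<and> ((\<lambda>z. Phi z \<xi>) has_real_derivative 0) (at z)
                      \<longrightarrow> z = x0 \<xi>)) \<and>
            (\<forall>W. (\<lambda>\<xi>. Phi (x0 \<xi>) \<xi> / (2 * pi)
                     - \<xi> powr (\<kappa>0 / e) * (\<Sum>\<omega>\<in>{\<omega>\<in>Dset f. \<omega> \<le> W}. A \<omega> * \<xi> powr (- \<omega> / e)))
                  \<in> o[at_top](\<lambda>\<xi>. \<xi> powr ((\<kappa>0 - W) / e)))))"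

text \<open>Case alpha_0 > 0: finite part (omega \<le> kappa0) of the expansion; the term with index
  omega has exponent (kappa0 - omega)/(d kappa0 - 1).\<close>
definition Tflat_pos :: "real \<Rightarrow> real \<Rightarrow> (real \<Rightarrow> real) \<Rightarrow> (real \<Rightarrow> real)" where
  "Tflat_pos d q f =
     (let A = (THE A. crit_expansion d q f A); e = d * lexp f - 1
      in (\<lambda>\<epsilon>. if 0 \<le> \<epsilon> then A (lexp f - \<epsilon> * e) else 0))"

definition Tflat :: "real \<Rightarrow> real \<Rightarrow> (real \<Rightarrow> real) \<Rightarrow> (real \<Rightarrow> real)" where
  "Tflat d q f =
     (if 0 < f (lexp f) then Tflat_pos d q f
      else (\<lambda>\<epsilon>. - Tflat_pos d q (\<lambda>\<kappa>. - f \<kappa>) \<epsilon>))"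

definition Tflat_defined :: "real \<Rightarrow> real \<Rightarrow> (real \<Rightarrow> real) \<Rightarrow> bool" where
  "Tflat_defined d q f \<longleftrightarrow> is_twist f \<and> lexp f > 1 / d \<and>
     (\<exists>!A. crit_expansion d q (if 0 < f (lexp f) then f else (\<lambda>\<kappa>. - f \<kappa>)) A)"

text \<open>twchain d q f0 P j = S_j T S_{j-1} ... T S_1 (f0), with S_j(f) = f + P j.\<close>
primrec twchain :: "real \<Rightarrow> real \<Rightarrow> (real \<Rightarrow> real) \<Rightarrow> (nat \<Rightarrow> int poly) \<Rightarrow> nat \<Rightarrow> (real \<Rightarrow> real)" where
  "twchain d q f0 P 0 = f0"
| "twchain d q f0 P (Suc j) =
     (if j = 0 then shift (P 1) f0 else shift (P (Suc j)) (Tflat d q (twchain d q f0 P j)))"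

end

theory Submission
  imports Defs "HOL-Real_Asymp.Real_Asymp"
begin

text \<open>For a twist function f with leading exponent \<kappa>0 > 1/d and positive leading
  coefficient, the substitution u = q z / \<xi> turns the critical-point equation of
  z \<mapsto> \<Phi>(z, \<xi>) into \<psi>(u) = c \<xi>^(1/d) with \<psi>(u) = \<Sum> \<alpha>(\<kappa>) \<kappa> u^(\<kappa> - 1/d), which is
  eventually strictly increasing; so x0(\<xi>) exists and is unique for large \<xi>. With the
  scale T = \<xi>^(-1/(d \<kappa>0 - 1)) and v = u T the equation becomes
  \<alpha>(\<kappa>0) \<kappa>0 v^(\<kappa>0 - 1/d) + \<Sum>(\<kappa> < \<kappa>0) \<alpha>(\<kappa>) \<kappa> T^(\<kappa>0 - \<kappa>) v^(\<kappa> - 1/d) = c, and bootstrapping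
  with the binomial series shows that v, and hence \<xi>^(-\<kappa>0/(d \<kappa>0 - 1)) \<Phi>(x0(\<xi>), \<xi>), has
  expansions in the powers T^\<omega>, \<omega> \<in> D_f, to every order. The constant term is positive
  because d \<kappa>0 > 1, and asymptotic expansions are unique, so T\<flat> is well defined.

  The support of T\<flat>(f) lies in [0, \<kappa>0/(d \<kappa>0 - 1)], and \<kappa>/(d \<kappa> - 1) < 1 whenever \<kappa> \<ge> 1
  and d > 2. Hence after a shift S of degree at least 1 the leading exponent is exactly
  deg S > 1/d, and the chain can be continued.\<close>

lemma bigo_tendsto_0:
  assumes "f \<in> O[F](g)" "(g \<longlongrightarrow> 0) F" shows "(f \<longlongrightarrow> (0::real)) F"
proof -
  obtain c where c: "c > 0" "eventually (\<lambda>x. norm (f x) \<le> c * norm (g x)) F"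
    using landau_o.bigE[OF assms(1)] by blast
  have "((\<lambda>x. c * norm (g x)) \<longlongrightarrow> c * 0) F"
    by (intro tendsto_mult tendsto_const tendsto_norm_zero assms(2))
  then show ?thesis by (intro Lim_null_comparison[OF c(2)]) simp
qed

lemma smallo_bigo_1_tendsto_0:
  assumes "f \<in> o[F](g)" "g \<in> O[F](\<lambda>_. 1)" shows "(f \<longlongrightarrow> (0::real)) F"
  using smalloD_tendsto[OF landau_o.small_big_trans[OF assms]] by simp

lemma DERIV_falling_factor_powr:
  fixes a :: real
  assumes "t > 0"
  shows "DERIV (\<lambda>x. (\<Prod>i<m. (a - real i)) * x powr (a - real m)) t
    :> (\<Prod>i<Suc m. (a - real i)) * t powr (a - real (Suc m))"
proof -
  have "DERIV (\<lambda>x. x powr (a - real m)) t :> (a - real m) * t powr (a - real m - 1)"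
    using assms by (auto intro!: derivative_eq_intros)
  then have "DERIV (\<lambda>x. (\<Prod>i<m. (a - real i)) * x powr (a - real m)) t
      :> (\<Prod>i<m. (a - real i)) * ((a - real m) * t powr (a - real m - 1))"
    by (rule DERIV_cmult)
  then show ?thesis by (simp add: algebra_simps)
qed

lemma powr_le_half_plus_three_halves:
  fixes t s :: real
  assumes "1/2 \<le> t" "t \<le> 3/2"
  shows "t powr s \<le> (1/2) powr s + (3/2) powr s"
proof (cases "s \<ge> 0")
  case True
  then have "t powr s \<le> (3/2) powr s" using assms by (intro powr_mono2) auto
  then show ?thesis by (smt (verit) powr_ge_zero)
next
  case False
  then have "t powr s \<le> (1/2) powr s" using assms by (intro powr_mono2') auto
  then show ?thesis by (smt (verit) powr_ge_zero)
qed

lemma powr_one_plus_taylor_bound: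
  fixes a :: real and N :: nat
  assumes N: "N > 0"
  shows "\<exists>C. \<forall>y. \<bar>y\<bar> \<le> 1/2 \<longrightarrow>
     \<bar>(1 + y) powr a - (\<Sum>m<N. ((\<Prod>i<m. (a - real i)) / fact m) * y ^ m)\<bar> \<le> C * \<bar>y\<bar> ^ N"
proof -
  define diff where "diff m x = (\<Prod>i<m. (a - real i)) * x powr (a - real m)" for m x
  define P where "P = \<bar>\<Prod>i<N. (a - real i)\<bar>"
  define C where "C = P * ((1/2) powr (a - real N) + (3/2) powr (a - real N)) / fact N"
  have diff_deriv: "DERIV (diff m) t :> diff (Suc m) t" if "1/2 \<le> t" for m t
    unfolding diff_def using that by (intro DERIV_falling_factor_powr) simp
  have "\<bar>(1 + y) powr a - (\<Sum>m<N. ((\<Prod>i<m. (a - real i)) / fact m) * y ^ m)\<bar> \<le> C * \<bar>y\<bar> ^ N"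
    if y: "\<bar>y\<bar> \<le> 1/2" for y
  proof (cases "y = 0")
    case True
    then show ?thesis using N by (simp add: zero_power)
  next
    case False
    have "\<exists>t. (if 1 + y < 1 then 1 + y < t \<and> t < 1 else 1 < t \<and> t < 1 + y) \<and>
      (\<lambda>x. x powr a) (1 + y) = (\<Sum>m<N. (diff m 1 / fact m) * ((1 + y) - 1)^m)
        + (diff N t / fact N) * ((1 + y) - 1)^N"
    proof (rule Taylor[where a="1/2" and b="3/2"])
      show "diff 0 = (\<lambda>x. x powr a)" by (simp add: diff_def fun_eq_iff)
      show "\<forall>m t. m < N \<and> 1/2 \<le> t \<and> t \<le> 3/2 \<longrightarrow> DERIV (diff m) t :> diff (Suc m) t"
        using diff_deriv by blast
    qed (use N y False in auto)
    then obtain t where t_between: "(if 1 + y < 1 then 1 + y < t \<and> t < 1 else 1 < t \<and> t < 1 + y)"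
      and taylor: "(1 + y) powr a = (\<Sum>m<N. (diff m 1 / fact m) * y^m) + (diff N t / fact N) * y^N"
      by auto
    have t: "1/2 \<le> t" "t \<le> 3/2" using t_between y by (auto split: if_splits)
    have "\<bar>(1 + y) powr a - (\<Sum>m<N. ((\<Prod>i<m. (a - real i)) / fact m) * y ^ m)\<bar>
        = \<bar>diff N t / fact N\<bar> * \<bar>y\<bar> ^ N"
      by (simp add: taylor diff_def abs_mult power_abs)
    also have "\<bar>diff N t / fact N\<bar> = P * t powr (a - real N) / fact N"
      using t by (simp add: diff_def P_def abs_mult)
    also have "\<dots> \<le> C"
      unfolding C_def using powr_le_half_plus_three_halves[OF t, of "a - real N"]
      by (intro divide_right_mono mult_left_mono) (auto simp: P_def)
    finally show ?thesis by (simp add: mult_right_mono)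
  qed
  then show ?thesis by blast
qed

section \<open>Power sums in a vanishing scale\<close>

locale vanishing_scale =
  fixes T :: "real \<Rightarrow> real"
  assumes eventually_scale_pos: "eventually (\<lambda>x. T x > 0) at_top"
    and scale_tendsto_0: "(T \<longlongrightarrow> 0) at_top"
begin

lemma scale_powr_bigo: "a \<le> b \<Longrightarrow> (\<lambda>x. T x powr b) \<in> O(\<lambda>x. T x powr a)"
proof (rule bigoI[where c=1])
  assume "a \<le> b"
  have "eventually (\<lambda>x. T x < 1) at_top" using order_tendstoD(2)[OF scale_tendsto_0, of 1] by simp
  with eventually_scale_pos show "eventually (\<lambda>x. norm (T x powr b) \<le> 1 * norm (T x powr a)) at_top"
    by eventually_elim (use \<open>a \<le> b\<close> in \<open>simp add: powr_mono'\<close>)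
qed

lemma scale_powr_tendsto_0: "0 < a \<Longrightarrow> ((\<lambda>x. T x powr a) \<longlongrightarrow> 0) at_top"
  by (rule tendsto_zero_powrI[OF scale_tendsto_0])
     (use eventually_scale_pos in \<open>auto elim: eventually_mono\<close>)

lemma scale_powr_smallo: "a < b \<Longrightarrow> (\<lambda>x. T x powr b) \<in> o(\<lambda>x. T x powr a)"
proof (rule smalloI_tendsto)
  assume "a < b"
  then have "((\<lambda>x. T x powr (b - a)) \<longlongrightarrow> 0) at_top" by (intro scale_powr_tendsto_0) auto
  moreover have "eventually (\<lambda>x. T x powr (b - a) = T x powr b / T x powr a) at_top"
    using eventually_scale_pos by eventually_elim (simp add: powr_diff)
  ultimately show "((\<lambda>x. T x powr b / T x powr a) \<longlongrightarrow> 0) at_top"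
    using tendsto_cong by fastforce
  show "eventually (\<lambda>x. T x powr a \<noteq> 0) at_top"
    using eventually_scale_pos by eventually_elim simp
qed

lemma scale_powr_0_bigo: "(\<lambda>x. T x powr 0) \<in> O(\<lambda>_. 1)" "(\<lambda>_. 1) \<in> O(\<lambda>x. T x powr 0)"
proof -
  have "eventually (\<lambda>x. T x powr 0 = 1) at_top"
    using eventually_scale_pos by eventually_elim simp
  from landau_o.big.in_cong[OF this] landau_o.big.cong[OF this]
  show "(\<lambda>x. T x powr 0) \<in> O(\<lambda>_. 1)" "(\<lambda>_. 1) \<in> O(\<lambda>x. T x powr 0)" by auto
qed

lemma scale_powr_bigo_1: "0 \<le> a \<Longrightarrow> (\<lambda>x. T x powr a) \<in> O(\<lambda>_. 1)"
  using landau_o.big_trans[OF scale_powr_bigo[of 0 a] scale_powr_0_bigo(1)] by simp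

text \<open>Uniqueness of asymptotic expansions: divide by the smallest power with a nonzero
  coefficient and let x \<rightarrow> \<infinity>.\<close>
lemma power_sum_smallo_imp_coeffs_zero:
  assumes S: "finite S" and small: "(\<lambda>x. \<Sum>\<omega>\<in>S. c \<omega> * T x powr \<omega>) \<in> o(\<lambda>x. T x powr W)"
    and le: "\<forall>\<omega>\<in>S. \<omega> \<le> W"
  shows "\<forall>\<omega>\<in>S. c \<omega> = 0"
proof (rule ccontr)
  assume "\<not> (\<forall>\<omega>\<in>S. c \<omega> = 0)"
  define S' where "S' = {\<omega>\<in>S. c \<omega> \<noteq> 0}"
  have "S' \<noteq> {}" and S'_fin: "finite S'" using \<open>\<not> (\<forall>\<omega>\<in>S. c \<omega> = 0)\<close> S by (auto simp: S'_def)
  define m where "m = Min S'"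
  have m: "m \<in> S'" using \<open>S' \<noteq> {}\<close> S'_fin by (simp add: m_def)
  have m_le: "\<And>\<omega>. \<omega> \<in> S' \<Longrightarrow> m \<le> \<omega>" using S'_fin by (simp add: m_def)
  have sum_S': "(\<Sum>\<omega>\<in>S. c \<omega> * T x powr \<omega>) = (\<Sum>\<omega>\<in>S'. c \<omega> * T x powr \<omega>)" for x
    by (rule sum.mono_neutral_right) (auto simp: S'_def S)
  define g where "g x = (\<Sum>\<omega>\<in>S'. c \<omega> * T x powr \<omega>) * T x powr (-m)" for x
  have "g \<in> o(\<lambda>x. T x powr W * T x powr (-m))"
    unfolding g_def using landau_o.small.mult_right[OF small, of "\<lambda>x. T x powr (-m)"] sum_S'
    by simp
  also have "(\<lambda>x. T x powr W * T x powr (-m)) = (\<lambda>x. T x powr (W - m))"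
    by (simp add: powr_add[symmetric])
  finally have "g \<in> o(\<lambda>x. T x powr (W - m))" .
  moreover have "W - m \<ge> 0" using le m by (auto simp: S'_def)
  ultimately have g_0: "(g \<longlongrightarrow> 0) at_top"
    using smallo_bigo_1_tendsto_0 scale_powr_bigo_1 by blast
  have "eventually (\<lambda>x. g x = c m + (\<Sum>\<omega>\<in>S'-{m}. c \<omega> * T x powr (\<omega> - m))) at_top"
    using eventually_scale_pos
  proof eventually_elim
    case (elim x)
    have "g x = (\<Sum>\<omega>\<in>S'. c \<omega> * T x powr (\<omega> - m))"
      by (simp add: g_def sum_distrib_right mult.assoc powr_add[symmetric])
    also have "\<dots> = c m * T x powr (m - m) + (\<Sum>\<omega>\<in>S'-{m}. c \<omega> * T x powr (\<omega> - m))"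
      using m S'_fin by (simp add: sum.remove)
    finally show ?case using elim by simp
  qed
  moreover have "((\<lambda>x. c m + (\<Sum>\<omega>\<in>S'-{m}. c \<omega> * T x powr (\<omega> - m)))
      \<longlongrightarrow> c m + (\<Sum>\<omega>\<in>S'-{m}. c \<omega> * 0)) at_top"
  proof (intro tendsto_add tendsto_const tendsto_sum tendsto_mult)
    fix \<omega> assume "\<omega> \<in> S' - {m}"
    then have "\<omega> - m > 0" using m_le[of \<omega>] by auto
    then show "((\<lambda>x. T x powr (\<omega> - m)) \<longlongrightarrow> 0) at_top" by (rule scale_powr_tendsto_0)
  qed
  ultimately have "(g \<longlongrightarrow> c m) at_top" using tendsto_cong by force
  with g_0 have "c m = 0" using tendsto_unique[OF trivial_limit_at_top_linorder] by blast
  with m show False by (simp add: S'_def)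
qed

lemma power_sum_bigo_imp_coeffs_zero:
  assumes S: "finite S" and big: "(\<lambda>x. \<Sum>\<omega>\<in>S. c \<omega> * T x powr \<omega>) \<in> O(\<lambda>x. T x powr W)"
    and \<omega>: "\<omega> \<in> S" "\<omega> < W"
  shows "c \<omega> = 0"
proof -
  define S1 where "S1 = {\<omega>\<in>S. \<omega> < W}"
  define S2 where "S2 = {\<omega>\<in>S. \<not> \<omega> < W}"
  have fin: "finite S1" "finite S2" using S by (auto simp: S1_def S2_def)
  have "(\<Sum>\<omega>\<in>S. c \<omega> * T x powr \<omega>) = (\<Sum>\<omega>\<in>S1. c \<omega> * T x powr \<omega>) + (\<Sum>\<omega>\<in>S2. c \<omega> * T x powr \<omega>)"
    for x using fin by (subst sum.union_disjoint[symmetric]) (auto simp: S1_def S2_def intro!: sum.cong)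
  moreover have "(\<lambda>x. \<Sum>\<omega>\<in>S2. c \<omega> * T x powr \<omega>) \<in> O(\<lambda>x. T x powr W)"
  proof (intro big_sum_in_bigo)
    fix \<omega> assume "\<omega> \<in> S2"
    then have "(\<lambda>x. T x powr \<omega>) \<in> O(\<lambda>x. T x powr W)" by (intro scale_powr_bigo) (simp add: S2_def)
    then show "(\<lambda>x. c \<omega> * T x powr \<omega>) \<in> O(\<lambda>x. T x powr W)" by (cases "c \<omega> = 0") auto
  qed
  ultimately have big1: "(\<lambda>x. \<Sum>\<omega>\<in>S1. c \<omega> * T x powr \<omega>) \<in> O(\<lambda>x. T x powr W)"
    using sum_in_bigo(2)[OF big] by fastforce
  have "\<omega> \<in> S1" using \<omega> by (simp add: S1_def)
  define W' where "W' = Max S1"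
  have "W' \<in> S1" unfolding W'_def using \<open>\<omega> \<in> S1\<close> fin by (intro Max_in) auto
  then have "(\<lambda>x. \<Sum>\<omega>\<in>S1. c \<omega> * T x powr \<omega>) \<in> o(\<lambda>x. T x powr W')"
    by (intro landau_o.big_small_trans[OF big1 scale_powr_smallo]) (simp add: S1_def)
  moreover have "\<forall>\<omega>\<in>S1. \<omega> \<le> W'" using fin by (simp add: W'_def)
  ultimately show ?thesis
    using power_sum_smallo_imp_coeffs_zero[OF fin(1)] \<open>\<omega> \<in> S1\<close> by blast
qed

end

text \<open>An abstraction of the exponent monoid D_f, with \<delta> a lower bound for its nonzero elements.\<close>

locale exponent_scale = vanishing_scale T for T +
  fixes D :: "real set" and \<delta> :: real
  assumes min_exponent_pos: "\<delta> > 0"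
    and zero_exponent: "0 \<in> D"
    and exponent_add: "\<lbrakk>x \<in> D; y \<in> D\<rbrakk> \<Longrightarrow> x + y \<in> D"
    and min_exponent_le: "\<lbrakk>x \<in> D; x \<noteq> 0\<rbrakk> \<Longrightarrow> \<delta> \<le> x"
    and finite_exponents_le: "finite {\<omega>\<in>D. \<omega> \<le> W}"
begin

lemma exponent_nonneg: "x \<in> D \<Longrightarrow> 0 \<le> x"
  using min_exponent_le min_exponent_pos by (cases "x = 0") force+

definition power_sum :: "real set \<Rightarrow> (real \<Rightarrow> real) \<Rightarrow> real \<Rightarrow> real" where
  "power_sum S c x = (\<Sum>\<omega>\<in>S. c \<omega> * T x powr \<omega>)"

definition expandable :: "nat \<Rightarrow> (real \<Rightarrow> real) \<Rightarrow> bool" where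
  "expandable N g \<longleftrightarrow> (\<exists>S c. finite S \<and> S \<subseteq> D \<and>
     (\<lambda>x. g x - power_sum S c x) \<in> O(\<lambda>x. T x powr (real N * \<delta>)))"

lemma power_sum_add:
  assumes "finite S" "finite S'"
  shows "power_sum S c x + power_sum S' c' x =
    power_sum (S \<union> S') (\<lambda>\<omega>. (if \<omega> \<in> S then c \<omega> else 0) + (if \<omega> \<in> S' then c' \<omega> else 0)) x"
proof -
  have 1: "power_sum S c x = (\<Sum>\<omega>\<in>S \<union> S'. (if \<omega> \<in> S then c \<omega> else 0) * T x powr \<omega>)"
    unfolding power_sum_def using assms by (intro sum.mono_neutral_cong_left) auto
  have 2: "power_sum S' c' x = (\<Sum>\<omega>\<in>S \<union> S'. (if \<omega> \<in> S' then c' \<omega> else 0) * T x powr \<omega>)"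
    unfolding power_sum_def using assms by (intro sum.mono_neutral_cong_left) auto
  show ?thesis unfolding 1 2 by (simp add: power_sum_def sum.distrib[symmetric] distrib_right)
qed

lemma power_sum_mult:
  assumes "finite S" "finite S'"
  shows "power_sum S c x * power_sum S' c' x =
    power_sum ((\<lambda>(a, b). a + b) ` (S \<times> S'))
       (\<lambda>\<sigma>. \<Sum>p\<in>{p\<in>S \<times> S'. fst p + snd p = \<sigma>}. c (fst p) * c' (snd p)) x"
proof -
  have "power_sum S c x * power_sum S' c' x
      = (\<Sum>p\<in>S \<times> S'. c (fst p) * c' (snd p) * T x powr (fst p + snd p))"
    unfolding power_sum_def sum_product sum.cartesian_product
    by (intro sum.cong refl) (auto simp: powr_add)
  also have "\<dots> = (\<Sum>\<sigma>\<in>(\<lambda>(a, b). a + b) ` (S \<times> S').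
      (\<Sum>p\<in>{p\<in>S \<times> S'. (\<lambda>(a, b). a + b) p = \<sigma>}. c (fst p) * c' (snd p) * T x powr (fst p + snd p)))"
    using assms by (intro sum.group[symmetric]) auto
  also have "\<dots> = power_sum ((\<lambda>(a, b). a + b) ` (S \<times> S'))
       (\<lambda>\<sigma>. \<Sum>p\<in>{p\<in>S \<times> S'. fst p + snd p = \<sigma>}. c (fst p) * c' (snd p)) x"
    unfolding power_sum_def sum_distrib_right
    by (intro sum.cong refl) (auto simp: case_prod_beta)
  finally show ?thesis .
qed

lemma power_sum_bigo_1: "S \<subseteq> D \<Longrightarrow> power_sum S c \<in> O(\<lambda>_. 1)"
  unfolding power_sum_def
  by (intro big_sum_in_bigo landau_o.big.mult_left[of _ _ _ "\<lambda>_. c _", simplified])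
     (auto intro!: scale_powr_bigo_1 exponent_nonneg)

lemma power_sum_bigo_min_exponent: "S \<subseteq> D - {0} \<Longrightarrow> power_sum S c \<in> O(\<lambda>x. T x powr \<delta>)"
  unfolding power_sum_def
  by (intro big_sum_in_bigo landau_o.big.mult_left[of _ _ _ "\<lambda>_. c _", simplified])
     (auto intro!: scale_powr_bigo min_exponent_le)

lemma scale_powr_multiple_bigo_1: "(\<lambda>x. T x powr (real N * \<delta>)) \<in> O(\<lambda>_. 1)"
  using min_exponent_pos by (intro scale_powr_bigo_1) auto

lemma scale_powr_multiple_bigo: "N \<le> M \<Longrightarrow>
    (\<lambda>x. T x powr (real M * \<delta>)) \<in> O(\<lambda>x. T x powr (real N * \<delta>))"
  using min_exponent_pos by (intro scale_powr_bigo mult_right_mono) auto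

lemma expandable_cong: "expandable N g \<Longrightarrow> eventually (\<lambda>x. g x = h x) at_top \<Longrightarrow> expandable N h"
  unfolding expandable_def
proof (elim exE conjE)
  fix S c assume S: "finite S" "S \<subseteq> D"
    and approx: "(\<lambda>x. g x - power_sum S c x) \<in> O(\<lambda>x. T x powr (real N * \<delta>))"
    and ev: "eventually (\<lambda>x. g x = h x) at_top"
  have "eventually (\<lambda>x. g x - power_sum S c x = h x - power_sum S c x) at_top"
    using ev by eventually_elim simp
  with approx have "(\<lambda>x. h x - power_sum S c x) \<in> O(\<lambda>x. T x powr (real N * \<delta>))"
    using landau_o.big.in_cong by metis
  with S show "\<exists>S c. finite S \<and> S \<subseteq> D \<and>
      (\<lambda>x. h x - power_sum S c x) \<in> O(\<lambda>x. T x powr (real N * \<delta>))"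
    by blast
qed

lemma expandable_bigo: "g \<in> O(\<lambda>x. T x powr (real N * \<delta>)) \<Longrightarrow> expandable N g"
  unfolding expandable_def by (intro exI[of _ "{}"]) (auto simp: power_sum_def)

lemma expandable_power_sum: "finite S \<Longrightarrow> S \<subseteq> D \<Longrightarrow> expandable N (power_sum S c)"
  unfolding expandable_def by (intro exI[of _ S] exI[of _ c]) auto

lemma expandable_const: "expandable N (\<lambda>_. k)"
proof -
  have "expandable N (power_sum {0} (\<lambda>_. k))" using zero_exponent by (intro expandable_power_sum) auto
  moreover have "eventually (\<lambda>x. power_sum {0} (\<lambda>_. k) x = k) at_top"
    using eventually_scale_pos by eventually_elim (simp add: power_sum_def)
  ultimately show ?thesis by (rule expandable_cong)
qed

lemma expandable_0: "g \<in> O(\<lambda>_. 1) \<Longrightarrow> expandable 0 g"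
  by (intro expandable_bigo) (use scale_powr_0_bigo(2) in \<open>auto intro: landau_o.big_trans\<close>)

lemma expandable_add:
  assumes "expandable N g" "expandable N h" shows "expandable N (\<lambda>x. g x + h x)"
proof -
  obtain S c where S: "finite S" "S \<subseteq> D"
    "(\<lambda>x. g x - power_sum S c x) \<in> O(\<lambda>x. T x powr (real N * \<delta>))"
    using assms(1) unfolding expandable_def by blast
  obtain S' c' where S': "finite S'" "S' \<subseteq> D"
    "(\<lambda>x. h x - power_sum S' c' x) \<in> O(\<lambda>x. T x powr (real N * \<delta>))"
    using assms(2) unfolding expandable_def by blast
  define c'' where "c'' = (\<lambda>\<omega>. (if \<omega> \<in> S then c \<omega> else 0) + (if \<omega> \<in> S' then c' \<omega> else 0))"
  have "(\<lambda>x. (g x - power_sum S c x) + (h x - power_sum S' c' x)) \<in> O(\<lambda>x. T x powr (real N * \<delta>))"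
    by (rule sum_in_bigo(1)[OF S(3) S'(3)])
  also have "(\<lambda>x. (g x - power_sum S c x) + (h x - power_sum S' c' x))
      = (\<lambda>x. (g x + h x) - power_sum (S \<union> S') c'' x)"
    unfolding c''_def by (simp add: power_sum_add[OF S(1) S'(1), of c _ c', symmetric] fun_eq_iff)
  finally show ?thesis
    unfolding expandable_def using S S' by (intro exI[of _ "S \<union> S'"] exI[of _ c'']) auto
qed

lemma expandable_cmult:
  assumes "expandable N g" shows "expandable N (\<lambda>x. k * g x)"
proof -
  obtain S c where S: "finite S" "S \<subseteq> D"
    "(\<lambda>x. g x - power_sum S c x) \<in> O(\<lambda>x. T x powr (real N * \<delta>))"
    using assms(1) unfolding expandable_def by blast
  have "(\<lambda>x. k * (g x - power_sum S c x)) \<in> O(\<lambda>x. T x powr (real N * \<delta>))"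
    using S(3) by (cases "k = 0") auto
  also have "(\<lambda>x. k * (g x - power_sum S c x)) = (\<lambda>x. k * g x - power_sum S (\<lambda>\<omega>. k * c \<omega>) x)"
    by (auto simp: power_sum_def sum_distrib_left algebra_simps fun_eq_iff)
  finally show ?thesis unfolding expandable_def using S by blast
qed

lemma expandable_diff: "expandable N g \<Longrightarrow> expandable N h \<Longrightarrow> expandable N (\<lambda>x. g x - h x)"
  using expandable_add[of N g "\<lambda>x. - h x"] expandable_cmult[of N h "-1"] by simp

lemma expandable_mult:
  assumes "expandable N g" "expandable N h" shows "expandable N (\<lambda>x. g x * h x)"
proof -
  obtain S c where S: "finite S" "S \<subseteq> D"
    and E: "(\<lambda>x. g x - power_sum S c x) \<in> O(\<lambda>x. T x powr (real N * \<delta>))"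
    using assms(1) unfolding expandable_def by blast
  obtain S' c' where S': "finite S'" "S' \<subseteq> D"
    and E': "(\<lambda>x. h x - power_sum S' c' x) \<in> O(\<lambda>x. T x powr (real N * \<delta>))"
    using assms(2) unfolding expandable_def by blast
  have E1: "(\<lambda>x. g x - power_sum S c x) \<in> O(\<lambda>_. 1)"
    using landau_o.big_trans[OF E scale_powr_multiple_bigo_1] .
  have "(\<lambda>x. power_sum S c x * (h x - power_sum S' c' x)) \<in> O(\<lambda>x. 1 * T x powr (real N * \<delta>))"
    "(\<lambda>x. (g x - power_sum S c x) * power_sum S' c' x) \<in> O(\<lambda>x. T x powr (real N * \<delta>) * 1)"
    "(\<lambda>x. (g x - power_sum S c x) * (h x - power_sum S' c' x)) \<in> O(\<lambda>x. 1 * T x powr (real N * \<delta>))"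
    by (intro landau_o.big.mult power_sum_bigo_1 S S' E E' E1)+
  then have "(\<lambda>x. power_sum S c x * (h x - power_sum S' c' x)
      + (g x - power_sum S c x) * power_sum S' c' x
      + (g x - power_sum S c x) * (h x - power_sum S' c' x)) \<in> O(\<lambda>x. T x powr (real N * \<delta>))"
    by (intro sum_in_bigo) auto
  also have "(\<lambda>x. power_sum S c x * (h x - power_sum S' c' x)
      + (g x - power_sum S c x) * power_sum S' c' x
      + (g x - power_sum S c x) * (h x - power_sum S' c' x))
    = (\<lambda>x. g x * h x - power_sum ((\<lambda>(a, b). a + b) ` (S \<times> S'))
        (\<lambda>\<sigma>. \<Sum>p\<in>{p\<in>S \<times> S'. fst p + snd p = \<sigma>}. c (fst p) * c' (snd p)) x)"
    using power_sum_mult[OF S(1) S'(1), of c _ c'] by (auto simp: fun_eq_iff algebra_simps)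
  finally show ?thesis
    unfolding expandable_def using S S' exponent_add
    by (intro exI[of _ "(\<lambda>(a, b). a + b) ` (S \<times> S')"] exI conjI) auto
qed

lemma expandable_power: "expandable N g \<Longrightarrow> expandable N (\<lambda>x. g x ^ m)"
  by (induction m) (auto intro: expandable_mult expandable_const)

lemma expandable_sum:
  "finite A \<Longrightarrow> (\<And>i. i \<in> A \<Longrightarrow> expandable N (g i)) \<Longrightarrow> expandable N (\<lambda>x. \<Sum>i\<in>A. g i x)"
  by (induction A rule: finite_induct) (auto intro: expandable_add expandable_const)

lemma expandable_monom:
  assumes "\<gamma> \<in> D" "expandable N g" shows "expandable N (\<lambda>x. T x powr \<gamma> * g x)"
proof -
  have "expandable N (power_sum {\<gamma>} (\<lambda>_. 1))" using assms(1) by (intro expandable_power_sum) auto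
  moreover have "power_sum {\<gamma>} (\<lambda>_. 1) = (\<lambda>x. T x powr \<gamma>)" by (simp add: power_sum_def fun_eq_iff)
  ultimately show ?thesis using assms(2) expandable_mult by fastforce
qed

text \<open>A positive power of the scale gains one order: this drives the bootstrap.\<close>
lemma expandable_monom_Suc:
  assumes "\<gamma> \<in> D" "\<gamma> \<noteq> 0" "expandable N g" shows "expandable (Suc N) (\<lambda>x. T x powr \<gamma> * g x)"
proof -
  obtain S c where S: "finite S" "S \<subseteq> D"
    and E: "(\<lambda>x. g x - power_sum S c x) \<in> O(\<lambda>x. T x powr (real N * \<delta>))"
    using assms(3) unfolding expandable_def by blast
  have "(\<lambda>x. T x powr \<gamma> * (g x - power_sum S c x)) \<in> O(\<lambda>x. T x powr \<gamma> * T x powr (real N * \<delta>))"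
    using E by (rule landau_o.big.mult_left)
  also have "(\<lambda>x. T x powr \<gamma> * T x powr (real N * \<delta>)) = (\<lambda>x. T x powr (\<gamma> + real N * \<delta>))"
    by (simp add: powr_add)
  also have "(\<lambda>x. T x powr (\<gamma> + real N * \<delta>)) \<in> O(\<lambda>x. T x powr (real (Suc N) * \<delta>))"
    using min_exponent_le[OF assms(1,2)] by (intro scale_powr_bigo) (simp add: algebra_simps)
  finally have "expandable (Suc N) (\<lambda>x. T x powr \<gamma> * (g x - power_sum S c x))"
    by (rule expandable_bigo)
  moreover have "expandable (Suc N) (\<lambda>x. T x powr \<gamma> * power_sum S c x)"
    using S by (intro expandable_monom[OF assms(1)] expandable_power_sum)
  ultimately show ?thesis using expandable_add by (fastforce simp: algebra_simps)
qed

text \<open>The expansion of such a function has no constant term.\<close>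
lemma expandable_tendsto_0_bigo:
  assumes N: "N > 0" and E: "expandable N y" and lim: "(y \<longlongrightarrow> 0) at_top"
  shows "y \<in> O(\<lambda>x. T x powr \<delta>)"
proof -
  obtain S c where S: "finite S" "S \<subseteq> D"
    and approx: "(\<lambda>x. y x - power_sum S c x) \<in> O(\<lambda>x. T x powr (real N * \<delta>))"
    using E unfolding expandable_def by blast
  define k where "k = (if 0 \<in> S then c 0 else 0)"
  have split: "power_sum S c x = (if 0 \<in> S then c 0 * T x powr 0 else 0) + power_sum (S - {0}) c x"
    for x using S(1) by (cases "0 \<in> S") (simp_all add: power_sum_def sum.remove)
  have const: "eventually (\<lambda>x. (if 0 \<in> S then c 0 * T x powr 0 else 0) = k) at_top"
    using eventually_scale_pos by eventually_elim (auto simp: k_def)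
  have approx': "(\<lambda>x. y x - power_sum S c x) \<in> O(\<lambda>x. T x powr \<delta>)"
    using landau_o.big_trans[OF approx scale_powr_multiple_bigo[of 1 N]] N by simp
  have rest: "power_sum (S - {0}) c \<in> O(\<lambda>x. T x powr \<delta>)"
    using S(2) by (intro power_sum_bigo_min_exponent) auto
  have "((\<lambda>x. T x powr (real N * \<delta>)) \<longlongrightarrow> 0) at_top"
    using N min_exponent_pos by (intro scale_powr_tendsto_0) auto
  then have lim1: "((\<lambda>x. y x - power_sum S c x) \<longlongrightarrow> 0) at_top" by (rule bigo_tendsto_0[OF approx])
  have "((\<lambda>x. T x powr \<delta>) \<longlongrightarrow> 0) at_top" using min_exponent_pos by (intro scale_powr_tendsto_0)
  then have lim2: "(power_sum (S - {0}) c \<longlongrightarrow> 0) at_top" by (rule bigo_tendsto_0[OF rest])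
  have "eventually (\<lambda>x. y x - (y x - power_sum S c x) - power_sum (S - {0}) c x = k) at_top"
    using const by eventually_elim (simp add: split)
  from tendsto_cong[OF this] have "((\<lambda>_::real. k) \<longlongrightarrow> 0) at_top"
    using tendsto_diff[OF tendsto_diff[OF lim lim1] lim2] by simp
  then have "k = 0" using tendsto_unique[OF trivial_limit_at_top_linorder _ tendsto_const] by blast
  have "(\<lambda>x. (y x - power_sum S c x) + power_sum (S - {0}) c x) \<in> O(\<lambda>x. T x powr \<delta>)"
    by (rule sum_in_bigo(1)[OF approx' rest])
  moreover have "eventually (\<lambda>x. (y x - power_sum S c x) + power_sum (S - {0}) c x = y x) at_top"
    using const by eventually_elim (simp add: split \<open>k = 0\<close>)
  ultimately show ?thesis using landau_o.big.in_cong by metis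
qed

lemma expandable_one_plus_powr:
  assumes N: "N > 0" and E: "expandable N y" and lim: "(y \<longlongrightarrow> 0) at_top"
  shows "expandable N (\<lambda>x. (1 + y x) powr a)"
proof -
  have y_small: "y \<in> O(\<lambda>x. T x powr \<delta>)" by (rule expandable_tendsto_0_bigo[OF N E lim])
  obtain C where C: "\<And>y. \<bar>y\<bar> \<le> 1/2 \<Longrightarrow>
     \<bar>(1 + y) powr a - (\<Sum>m<N. ((\<Prod>i<m. (a - real i)) / fact m) * y ^ m)\<bar> \<le> C * \<bar>y\<bar> ^ N"
    using powr_one_plus_taylor_bound[OF N, of a] by blast
  define Q where "Q x = (\<Sum>m<N. ((\<Prod>i<m. (a - real i)) / fact m) * y x ^ m)" for x
  have "eventually (\<lambda>x. dist (y x) 0 < 1/2) at_top" using lim by (rule tendstoD) simp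
  then have "eventually (\<lambda>x. norm ((1 + y x) powr a - Q x) \<le> C * norm (y x ^ N)) at_top"
    by eventually_elim (use C in \<open>simp add: Q_def power_abs\<close>)
  then have "(\<lambda>x. (1 + y x) powr a - Q x) \<in> O(\<lambda>x. y x ^ N)" by (rule bigoI)
  also have "(\<lambda>x. y x ^ N) \<in> O(\<lambda>x. (T x powr \<delta>) ^ N)" by (rule landau_o.big_power[OF y_small])
  also have "eventually (\<lambda>x. (T x powr \<delta>) ^ N = T x powr (real N * \<delta>)) at_top"
    using eventually_scale_pos by eventually_elim (simp add: powr_power)
  then have "(\<lambda>x. (T x powr \<delta>) ^ N) \<in> O(\<lambda>x. T x powr (real N * \<delta>))"
    by (rule landau_o.big.in_cong[THEN iffD2]) simp
  finally have "expandable N (\<lambda>x. (1 + y x) powr a - Q x)" by (rule expandable_bigo)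
  moreover have "expandable N Q" unfolding Q_def
    by (intro expandable_sum expandable_cmult expandable_power E) auto
  ultimately show ?thesis using expandable_add by fastforce
qed

lemma power_sum_approx_coeffs_eq:
  assumes S: "finite S" "\<forall>\<omega>. \<omega> \<notin> S \<longrightarrow> c \<omega> = 0"
    and S': "finite S'" "\<forall>\<omega>. \<omega> \<notin> S' \<longrightarrow> c' \<omega> = 0"
    and approx: "(\<lambda>x. G x - power_sum S c x) \<in> O(\<lambda>x. T x powr W)"
    and approx': "(\<lambda>x. G x - power_sum S' c' x) \<in> O(\<lambda>x. T x powr W)"
    and "\<omega> < W"
  shows "c \<omega> = c' \<omega>"
proof (cases "\<omega> \<in> S \<union> S'")
  case True
  have "power_sum S c x = (\<Sum>\<omega>\<in>S \<union> S'. c \<omega> * T x powr \<omega>)"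
    "power_sum S' c' x = (\<Sum>\<omega>\<in>S \<union> S'. c' \<omega> * T x powr \<omega>)" for x
    unfolding power_sum_def using S S' by (auto intro!: sum.mono_neutral_left)
  then have "(\<lambda>x. \<Sum>\<omega>\<in>S \<union> S'. (c' \<omega> - c \<omega>) * T x powr \<omega>)
      = (\<lambda>x. (G x - power_sum S c x) - (G x - power_sum S' c' x))"
    by (simp add: fun_eq_iff sum_subtractf[symmetric] left_diff_distrib)
  also have "\<dots> \<in> O(\<lambda>x. T x powr W)" by (rule sum_in_bigo(2)[OF approx approx'])
  finally have "(\<lambda>x. \<Sum>\<omega>\<in>S \<union> S'. (c' \<omega> - c \<omega>) * T x powr \<omega>) \<in> O(\<lambda>x. T x powr W)" .
  from power_sum_bigo_imp_coeffs_zero[OF _ this] show ?thesis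
    using S S' True \<open>\<omega> < W\<close> by auto
qed (use S S' in auto)

lemma expandable_approximations:
  assumes "\<And>N. expandable N G"
  obtains S a where "\<And>N. finite (S N)" "\<And>N. S N \<subseteq> D" "\<And>N \<omega>. \<omega> \<notin> S N \<Longrightarrow> a N \<omega> = 0"
    "\<And>N. (\<lambda>x. G x - power_sum (S N) (a N) x) \<in> O(\<lambda>x. T x powr (real N * \<delta>))"
proof -
  define good where "good N = (\<lambda>(S, a). finite S \<and> S \<subseteq> D \<and> (\<forall>\<omega>. \<omega> \<notin> S \<longrightarrow> a \<omega> = 0) \<and>
      (\<lambda>x. G x - power_sum S a x) \<in> O(\<lambda>x. T x powr (real N * \<delta>)))" for N
  have "\<exists>Sa. good N Sa" for N
  proof -
    obtain S c where S: "finite S" "S \<subseteq> D"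
      "(\<lambda>x. G x - power_sum S c x) \<in> O(\<lambda>x. T x powr (real N * \<delta>))"
      using assms[of N] unfolding expandable_def by blast
    define c' where "c' \<omega> = (if \<omega> \<in> S then c \<omega> else 0)" for \<omega>
    have "power_sum S c' = power_sum S c"
      by (auto simp: power_sum_def c'_def fun_eq_iff intro!: sum.cong)
    then have "good N (S, c')" using S unfolding good_def by (simp add: c'_def)
    then show ?thesis ..
  qed
  define S where "S N = fst (SOME Sa. good N Sa)" for N
  define a where "a N = snd (SOME Sa. good N Sa)" for N
  have "good N (S N, a N)" for N
    unfolding S_def a_def using someI_ex[OF \<open>\<exists>Sa. good N Sa\<close>] by simp
  then show ?thesis unfolding good_def by (intro that[of S a]) auto
qed

lemma truncated_expansion_smallo:
  assumes S: "finite S" "S \<subseteq> D" "\<And>\<omega>. \<omega> \<notin> S \<Longrightarrow> a \<omega> = 0"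
    and approx: "(\<lambda>x. G x - power_sum S a x) \<in> O(\<lambda>x. T x powr W')" and "W < W'"
    and agree: "\<And>\<omega>. \<omega> \<le> W \<Longrightarrow> A \<omega> = a \<omega>"
  shows "(\<lambda>x. G x - (\<Sum>\<omega>\<in>{\<omega>\<in>D. \<omega> \<le> W}. A \<omega> * T x powr \<omega>)) \<in> o(\<lambda>x. T x powr W)"
proof -
  have low: "(\<Sum>\<omega>\<in>{\<omega>\<in>D. \<omega> \<le> W}. A \<omega> * T x powr \<omega>) = (\<Sum>\<omega>\<in>{\<omega>\<in>S. \<omega> \<le> W}. a \<omega> * T x powr \<omega>)"
    for x
  proof -
    have "(\<Sum>\<omega>\<in>{\<omega>\<in>D. \<omega> \<le> W}. A \<omega> * T x powr \<omega>) = (\<Sum>\<omega>\<in>{\<omega>\<in>D. \<omega> \<le> W}. a \<omega> * T x powr \<omega>)"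
      by (intro sum.cong) (auto simp: agree)
    also have "\<dots> = (\<Sum>\<omega>\<in>{\<omega>\<in>S. \<omega> \<le> W}. a \<omega> * T x powr \<omega>)"
      using finite_exponents_le[of W] S(2,3) by (intro sum.mono_neutral_right) auto
    finally show ?thesis .
  qed
  have split: "power_sum S a x = (\<Sum>\<omega>\<in>{\<omega>\<in>S. \<omega> \<le> W}. a \<omega> * T x powr \<omega>)
      + (\<Sum>\<omega>\<in>{\<omega>\<in>S. \<not> \<omega> \<le> W}. a \<omega> * T x powr \<omega>)" for x
  proof -
    have "S = {\<omega>\<in>S. \<omega> \<le> W} \<union> {\<omega>\<in>S. \<not> \<omega> \<le> W}" by auto
    then have "power_sum S a x = (\<Sum>\<omega>\<in>{\<omega>\<in>S. \<omega> \<le> W} \<union> {\<omega>\<in>S. \<not> \<omega> \<le> W}. a \<omega> * T x powr \<omega>)"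
      unfolding power_sum_def by simp
    also have "\<dots> = (\<Sum>\<omega>\<in>{\<omega>\<in>S. \<omega> \<le> W}. a \<omega> * T x powr \<omega>)
        + (\<Sum>\<omega>\<in>{\<omega>\<in>S. \<not> \<omega> \<le> W}. a \<omega> * T x powr \<omega>)"
      using S(1) by (intro sum.union_disjoint) auto
    finally show ?thesis .
  qed
  have "(\<lambda>x. (G x - power_sum S a x) + (\<Sum>\<omega>\<in>{\<omega>\<in>S. \<not> \<omega> \<le> W}. a \<omega> * T x powr \<omega>))
      \<in> o(\<lambda>x. T x powr W)"
  proof (rule sum_in_smallo(1))
    show "(\<lambda>x. G x - power_sum S a x) \<in> o(\<lambda>x. T x powr W)"
      using approx scale_powr_smallo[OF \<open>W < W'\<close>] by (rule landau_o.big_small_trans)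
    show "(\<lambda>x. \<Sum>\<omega>\<in>{\<omega>\<in>S. \<not> \<omega> \<le> W}. a \<omega> * T x powr \<omega>) \<in> o(\<lambda>x. T x powr W)"
    proof (intro big_sum_in_smallo)
      fix \<omega> assume "\<omega> \<in> {\<omega>\<in>S. \<not> \<omega> \<le> W}"
      then have "(\<lambda>x. T x powr \<omega>) \<in> o(\<lambda>x. T x powr W)" by (intro scale_powr_smallo) auto
      then show "(\<lambda>x. a \<omega> * T x powr \<omega>) \<in> o(\<lambda>x. T x powr W)" by (cases "a \<omega> = 0") auto
    qed
  qed
  also have "(\<lambda>x. (G x - power_sum S a x) + (\<Sum>\<omega>\<in>{\<omega>\<in>S. \<not> \<omega> \<le> W}. a \<omega> * T x powr \<omega>))
      = (\<lambda>x. G x - (\<Sum>\<omega>\<in>{\<omega>\<in>D. \<omega> \<le> W}. A \<omega> * T x powr \<omega>))"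
    by (simp add: fun_eq_iff low split)
  finally show ?thesis .
qed

text \<open>Truncations of increasing order have coefficients that agree below their error
  order, so they glue to a single coefficient function.\<close>
lemma expansion_exists:
  assumes "\<And>N. expandable N G"
  shows "\<exists>A. (\<forall>\<omega>. \<omega> \<notin> D \<longrightarrow> A \<omega> = 0) \<and>
    (\<forall>W. (\<lambda>x. G x - (\<Sum>\<omega>\<in>{\<omega>\<in>D. \<omega> \<le> W}. A \<omega> * T x powr \<omega>)) \<in> o(\<lambda>x. T x powr W))"
proof -
  obtain S a where S: "\<And>N. finite (S N)" "\<And>N. S N \<subseteq> D" "\<And>N \<omega>. \<omega> \<notin> S N \<Longrightarrow> a N \<omega> = 0"
    and approx: "\<And>N. (\<lambda>x. G x - power_sum (S N) (a N) x) \<in> O(\<lambda>x. T x powr (real N * \<delta>))"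
    using expandable_approximations[OF assms] by blast
  have agree: "a N \<omega> = a M \<omega>" if "N \<le> M" "\<omega> < real N * \<delta>" for N M \<omega>
  proof (rule power_sum_approx_coeffs_eq[OF S(1) _ S(1) _ approx _ that(2)])
    show "(\<lambda>x. G x - power_sum (S M) (a M) x) \<in> O(\<lambda>x. T x powr (real N * \<delta>))"
      by (rule landau_o.big_trans[OF approx scale_powr_multiple_bigo[OF that(1)]])
  qed (use S(3) in blast)+
  define n where "n \<omega> = nat \<lceil>\<omega> / \<delta>\<rceil> + 1" for \<omega>
  have n: "\<omega> < real (n \<omega>) * \<delta>" for \<omega>
  proof -
    have "\<omega> / \<delta> \<le> real (nat \<lceil>\<omega> / \<delta>\<rceil>)" by linarith
    then have "\<omega> / \<delta> < real (n \<omega>)" by (simp add: n_def)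
    then show ?thesis using min_exponent_pos by (simp add: field_simps)
  qed
  define A where "A \<omega> = a (n \<omega>) \<omega>" for \<omega>
  have "A \<omega> = a (n W) \<omega>" if "\<omega> \<le> W" for \<omega> W
  proof (cases "n \<omega> \<le> n W")
    case True
    then show ?thesis unfolding A_def by (rule agree[OF _ n])
  next
    case False
    have "\<omega> < real (n W) * \<delta>" using n[of W] that by simp
    then show ?thesis unfolding A_def using False by (intro agree[symmetric]) auto
  qed
  then have "(\<lambda>x. G x - (\<Sum>\<omega>\<in>{\<omega>\<in>D. \<omega> \<le> W}. A \<omega> * T x powr \<omega>)) \<in> o(\<lambda>x. T x powr W)" for W
    using S n by (intro truncated_expansion_smallo[OF _ _ _ approx]) auto
  moreover have "\<forall>\<omega>. \<omega> \<notin> D \<longrightarrow> A \<omega> = 0" using S(2,3) by (auto simp: A_def)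
  ultimately show ?thesis by blast
qed

lemma expansion_coeffs_unique:
  assumes A: "\<forall>\<omega>. \<omega> \<notin> D \<longrightarrow> A \<omega> = 0"
    "\<And>W. (\<lambda>x. G x - (\<Sum>\<omega>\<in>{\<omega>\<in>D. \<omega> \<le> W}. A \<omega> * T x powr \<omega>)) \<in> o(\<lambda>x. T x powr W)"
    and B: "\<forall>\<omega>. \<omega> \<notin> D \<longrightarrow> B \<omega> = 0"
    "\<And>W. (\<lambda>x. G x - (\<Sum>\<omega>\<in>{\<omega>\<in>D. \<omega> \<le> W}. B \<omega> * T x powr \<omega>)) \<in> o(\<lambda>x. T x powr W)"
  shows "A = B"
proof
  fix \<omega>
  show "A \<omega> = B \<omega>"
  proof (cases "\<omega> \<in> D")
    case True
    have "(\<lambda>x. (G x - (\<Sum>\<omega>'\<in>{\<omega>'\<in>D. \<omega>' \<le> \<omega>}. A \<omega>' * T x powr \<omega>'))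
        - (G x - (\<Sum>\<omega>'\<in>{\<omega>'\<in>D. \<omega>' \<le> \<omega>}. B \<omega>' * T x powr \<omega>'))) \<in> o(\<lambda>x. T x powr \<omega>)"
      by (rule sum_in_smallo(2)[OF A(2) B(2)])
    then have "(\<lambda>x. \<Sum>\<omega>'\<in>{\<omega>'\<in>D. \<omega>' \<le> \<omega>}. (B \<omega>' - A \<omega>') * T x powr \<omega>') \<in> o(\<lambda>x. T x powr \<omega>)"
      by (simp add: sum_subtractf[symmetric] left_diff_distrib)
    then have "\<forall>\<omega>'\<in>{\<omega>'\<in>D. \<omega>' \<le> \<omega>}. B \<omega>' - A \<omega>' = 0"
      by (rule power_sum_smallo_imp_coeffs_zero[OF finite_exponents_le]) auto
    then show ?thesis using True by auto
  qed (use A B in auto)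
qed

lemma expansion_coeff_0_eq_limit:
  assumes "(\<lambda>x. G x - (\<Sum>\<omega>\<in>{\<omega>\<in>D. \<omega> \<le> 0}. A \<omega> * T x powr \<omega>)) \<in> o(\<lambda>x. T x powr 0)"
    and lim: "(G \<longlongrightarrow> L) at_top"
  shows "A 0 = L"
proof -
  have "{\<omega>\<in>D. \<omega> \<le> 0} = {0}" using exponent_nonneg zero_exponent by force
  with assms(1) have "(\<lambda>x. G x - A 0 * T x powr 0) \<in> o(\<lambda>x. T x powr 0)" by simp
  then have "((\<lambda>x. G x - A 0 * T x powr 0) \<longlongrightarrow> 0) at_top"
    by (rule smallo_bigo_1_tendsto_0[OF _ scale_powr_bigo_1]) simp
  moreover have "eventually (\<lambda>x. G x - A 0 * T x powr 0 = G x - A 0) at_top"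
    using eventually_scale_pos by eventually_elim simp
  ultimately have "((\<lambda>x. G x - A 0) \<longlongrightarrow> 0) at_top" by (rule Lim_transform_eventually)
  moreover have "((\<lambda>x. G x - A 0) \<longlongrightarrow> L - A 0) at_top" by (intro tendsto_diff lim tendsto_const)
  ultimately have "L - A 0 = 0" using tendsto_unique[OF trivial_limit_at_top_linorder] by blast
  then show ?thesis by simp
qed

end

section \<open>Leading exponents and the exponent monoid D_f\<close>

lemma twist_finite_supp: "is_twist f \<Longrightarrow> finite (tw_supp f)"
  by (simp add: is_twist_def)

lemma lexp_in_supp: "is_twist f \<Longrightarrow> lexp f \<in> tw_supp f"
  unfolding is_twist_def lexp_def by (intro Max_in) auto

lemma le_lexp: "is_twist f \<Longrightarrow> \<kappa> \<in> tw_supp f \<Longrightarrow> \<kappa> \<le> lexp f"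
  unfolding is_twist_def lexp_def by (intro Max_ge) auto

lemma twist_supp_nonneg: "is_twist f \<Longrightarrow> \<kappa> \<in> tw_supp f \<Longrightarrow> 0 \<le> \<kappa>"
  unfolding is_twist_def by auto

lemma lexp_gap_pos: "is_twist f \<Longrightarrow> \<kappa> \<in> tw_supp f - {lexp f} \<Longrightarrow> 0 < lexp f - \<kappa>"
  using le_lexp[of f \<kappa>] by auto

lemma tw_supp_uminus [simp]: "tw_supp (\<lambda>\<kappa>. - f \<kappa>) = tw_supp f"
  by (simp add: tw_supp_def)

lemma lexp_uminus [simp]: "lexp (\<lambda>\<kappa>. - f \<kappa>) = lexp f"
  by (simp add: lexp_def)

lemma is_twist_uminus [simp]: "is_twist (\<lambda>\<kappa>. - f \<kappa>) = is_twist f"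
  by (simp add: is_twist_def)

lemma Dset_uminus [simp]: "Dset (\<lambda>\<kappa>. - f \<kappa>) = Dset f"
  by (simp add: Dset_def)

text \<open>The least nonzero element of D_f; 1 by convention if f is a monomial.\<close>
definition min_gap :: "(real \<Rightarrow> real) \<Rightarrow> real" where
  "min_gap f = (if tw_supp f - {lexp f} = {} then 1
                else Min ((\<lambda>\<kappa>. lexp f - \<kappa>) ` (tw_supp f - {lexp f})))"

lemma min_gap_pos: "is_twist f \<Longrightarrow> 0 < min_gap f"
proof (cases "tw_supp f - {lexp f} = {}")
  case False
  assume "is_twist f"
  then have "min_gap f \<in> (\<lambda>\<kappa>. lexp f - \<kappa>) ` (tw_supp f - {lexp f})"
    unfolding min_gap_def using False by (simp add: twist_finite_supp)
  with \<open>is_twist f\<close> show ?thesis using lexp_gap_pos by fastforce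
qed (simp add: min_gap_def)

lemma min_gap_le: "is_twist f \<Longrightarrow> \<kappa> \<in> tw_supp f - {lexp f} \<Longrightarrow> min_gap f \<le> lexp f - \<kappa>"
  unfolding min_gap_def by (auto simp: twist_finite_supp)

lemma Dset_0: "0 \<in> Dset f"
  unfolding Dset_def by (intro CollectI exI[of _ "\<lambda>_. 0"]) simp

lemma Dset_add: "x \<in> Dset f \<Longrightarrow> y \<in> Dset f \<Longrightarrow> x + y \<in> Dset f"
  unfolding Dset_def
proof (elim CollectE exE, intro CollectI)
  fix n m :: "real \<Rightarrow> nat"
  assume "x = (\<Sum>\<kappa>\<in>tw_supp f - {lexp f}. real (n \<kappa>) * (lexp f - \<kappa>))"
    and "y = (\<Sum>\<kappa>\<in>tw_supp f - {lexp f}. real (m \<kappa>) * (lexp f - \<kappa>))"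
  then show "\<exists>n. x + y = (\<Sum>\<kappa>\<in>tw_supp f - {lexp f}. real (n \<kappa>) * (lexp f - \<kappa>))"
    by (intro exI[of _ "\<lambda>\<kappa>. n \<kappa> + m \<kappa>"]) (simp add: sum.distrib[symmetric] algebra_simps)
qed

lemma lexp_minus_in_Dset:
  assumes "is_twist f" "\<kappa> \<in> tw_supp f" shows "lexp f - \<kappa> \<in> Dset f"
proof (cases "\<kappa> = lexp f")
  case False
  have "(\<Sum>\<kappa>'\<in>tw_supp f - {lexp f}. real (if \<kappa>' = \<kappa> then 1 else 0) * (lexp f - \<kappa>'))
      = (\<Sum>\<kappa>'\<in>tw_supp f - {lexp f}. if \<kappa>' = \<kappa> then lexp f - \<kappa>' else 0)"
    by (intro sum.cong) auto
  also have "\<dots> = lexp f - \<kappa>" using assms False by (simp add: twist_finite_supp)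
  finally have "(\<Sum>\<kappa>'\<in>tw_supp f - {lexp f}. real (if \<kappa>' = \<kappa> then 1 else 0) * (lexp f - \<kappa>'))
      = lexp f - \<kappa>" .
  then show ?thesis unfolding Dset_def by (intro CollectI exI[of _ "\<lambda>\<kappa>'. if \<kappa>' = \<kappa> then 1 else 0"]) simp
qed (simp add: Dset_0)

lemma Dset_sum_nonneg:
  "is_twist f \<Longrightarrow> \<forall>\<kappa>\<in>tw_supp f - {lexp f}. 0 \<le> real (n \<kappa>) * (lexp f - \<kappa>)"
  using lexp_gap_pos by fastforce

lemma min_gap_le_Dset:
  assumes tw: "is_twist f" and \<omega>: "\<omega> \<in> Dset f" "\<omega> \<noteq> 0" shows "min_gap f \<le> \<omega>"
proof -
  obtain n where n: "\<omega> = (\<Sum>\<kappa>\<in>tw_supp f - {lexp f}. real (n \<kappa>) * (lexp f - \<kappa>))"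
    using \<omega>(1) unfolding Dset_def by blast
  then obtain \<kappa> where \<kappa>: "\<kappa> \<in> tw_supp f - {lexp f}" "n \<kappa> \<noteq> 0"
    using \<omega>(2) by (metis (mono_tags, lifting) of_nat_0 mult_zero_left sum.neutral)
  have "min_gap f \<le> lexp f - \<kappa>" by (rule min_gap_le[OF tw \<kappa>(1)])
  also have "\<dots> \<le> real (n \<kappa>) * (lexp f - \<kappa>)"
    using \<kappa>(2) lexp_gap_pos[OF tw \<kappa>(1)] by (simp add: mult_le_cancel_right1)
  also have "\<dots> \<le> \<omega>"
    unfolding n using \<kappa>(1) Dset_sum_nonneg[OF tw] twist_finite_supp[OF tw]
    by (intro member_le_sum) auto
  finally show ?thesis .
qed

lemma Dset_nonneg: "is_twist f \<Longrightarrow> \<omega> \<in> Dset f \<Longrightarrow> 0 \<le> \<omega>"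
  using min_gap_le_Dset min_gap_pos by (cases "\<omega> = 0") force+

text \<open>Every coefficient of a combination below W is at most W / min_gap f.\<close>
lemma finite_Dset_le:
  assumes tw: "is_twist f" shows "finite {\<omega>\<in>Dset f. \<omega> \<le> W}"
proof -
  define K where "K = tw_supp f - {lexp f}"
  define B where "B = nat \<lceil>W / min_gap f\<rceil>"
  define F where "F m = (\<Sum>\<kappa>\<in>K. real (m \<kappa>) * (lexp f - \<kappa>))" for m :: "real \<Rightarrow> nat"
  have fin: "finite K" using twist_finite_supp[OF tw] by (simp add: K_def)
  have "{\<omega>\<in>Dset f. \<omega> \<le> W} \<subseteq> F ` (K \<rightarrow>\<^sub>E {..B})"
  proof
    fix \<omega> assume "\<omega> \<in> {\<omega>\<in>Dset f. \<omega> \<le> W}"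
    then obtain n where n: "\<omega> = F n" and le: "\<omega> \<le> W" unfolding Dset_def F_def K_def by blast
    have "n \<kappa> \<le> B" if \<kappa>: "\<kappa> \<in> K" for \<kappa>
    proof -
      have "real (n \<kappa>) * min_gap f \<le> real (n \<kappa>) * (lexp f - \<kappa>)"
        using min_gap_le[OF tw] \<kappa> by (simp add: K_def mult_left_mono)
      also have "\<dots> \<le> F n"
        unfolding F_def using fin \<kappa> Dset_sum_nonneg[OF tw] by (intro member_le_sum) (auto simp: K_def)
      finally have "real (n \<kappa>) \<le> W / min_gap f"
        using n le min_gap_pos[OF tw] by (simp add: field_simps)
      then show ?thesis unfolding B_def by linarith
    qed
    then have "restrict n K \<in> K \<rightarrow>\<^sub>E {..B}" by auto
    moreover have "F (restrict n K) = F n" unfolding F_def by (intro sum.cong) auto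
    ultimately show "\<omega> \<in> F ` (K \<rightarrow>\<^sub>E {..B})" using n by (metis image_eqI)
  qed
  moreover have "finite (F ` (K \<rightarrow>\<^sub>E {..B}))" using fin by (intro finite_imageI finite_PiE) auto
  ultimately show ?thesis by (rule finite_subset)
qed

lemma exponent_scale_Dset:
  assumes tw: "is_twist f" and e: "e > 0"
  shows "exponent_scale (\<lambda>\<xi>. \<xi> powr (-1/e)) (Dset f) (min_gap f)"
proof unfold_locales
  show "eventually (\<lambda>x. x powr (-1/e) > 0) at_top"
    using eventually_gt_at_top[of 0] by eventually_elim simp
  show "((\<lambda>x. x powr (-1/e)) \<longlongrightarrow> 0) at_top"
    by (rule tendsto_neg_powr[OF _ filterlim_ident]) (use e in simp)
qed (use tw in \<open>auto intro: min_gap_pos Dset_0 finite_Dset_le Dset_add min_gap_le_Dset\<close>)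

section \<open>Uniqueness of the expansion defining T\<flat>\<close>

definition Phi_twist :: "real \<Rightarrow> real \<Rightarrow> (real \<Rightarrow> real) \<Rightarrow> real \<Rightarrow> real \<Rightarrow> real" where
  "Phi_twist d q f z \<xi> = z powr (1 / d) - 2 * pi * tw_eval f (q * z / \<xi>)"

lemma crit_expansion_iff:
  "crit_expansion d q f A \<longleftrightarrow> (\<forall>\<omega>. \<omega> \<notin> Dset f \<longrightarrow> A \<omega> = 0) \<and> A 0 \<noteq> 0 \<and>
    (\<exists>R x0. (\<forall>\<^sub>F \<xi> in at_top. 0 < x0 \<xi> \<and> R \<le> q * x0 \<xi> / \<xi> \<and>
               ((\<lambda>z. Phi_twist d q f z \<xi>) has_real_derivative 0) (at (x0 \<xi>)) \<and>
               (\<forall>z>0. R \<le> q * z / \<xi> \<and> ((\<lambda>z. Phi_twist d q f z \<xi>) has_real_derivative 0) (at z)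
                      \<longrightarrow> z = x0 \<xi>)) \<and>
     (\<forall>W. (\<lambda>\<xi>. Phi_twist d q f (x0 \<xi>) \<xi> / (2 * pi)
          - \<xi> powr (lexp f / (d * lexp f - 1)) *
            (\<Sum>\<omega>\<in>{\<omega>\<in>Dset f. \<omega> \<le> W}. A \<omega> * \<xi> powr (- \<omega> / (d * lexp f - 1))))
        \<in> o(\<lambda>\<xi>. \<xi> powr ((lexp f - W) / (d * lexp f - 1)))))"
  by (simp add: crit_expansion_def Phi_twist_def[abs_def] Let_def)

text \<open>An expansion in powers of \<xi> is an expansion of \<xi>^(-k/e) H(\<xi>) in the scale \<xi>^(-1/e).\<close>
lemma expansion_rescale_iff:
  fixes H :: "real \<Rightarrow> real" and e :: real
  shows "(\<lambda>\<xi>. H \<xi> - \<xi> powr (k / e) * (\<Sum>\<omega>\<in>S. A \<omega> * \<xi> powr (- \<omega> / e))) \<in> o(\<lambda>\<xi>. \<xi> powr ((k - W) / e))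
    \<longleftrightarrow> (\<lambda>\<xi>. \<xi> powr (- k / e) * H \<xi> - (\<Sum>\<omega>\<in>S. A \<omega> * (\<xi> powr (-1/e)) powr \<omega>))
          \<in> o(\<lambda>\<xi>. (\<xi> powr (-1/e)) powr W)"
    (is "?L \<in> o(?g) \<longleftrightarrow> ?R \<in> o(?h)")
proof -
  let ?s = "\<lambda>\<xi>::real. \<xi> powr (- k / e)"
  have "?L \<in> o(?g) \<longleftrightarrow> (\<lambda>\<xi>. ?s \<xi> * ?L \<xi>) \<in> o(\<lambda>\<xi>. ?s \<xi> * ?g \<xi>)"
    by (rule landau_o.small.mult_cancel_left[symmetric])
       (auto intro: eventually_mono[OF eventually_gt_at_top[of 0]])
  also have "\<dots> \<longleftrightarrow> ?R \<in> o(\<lambda>\<xi>. ?s \<xi> * ?g \<xi>)"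
    using eventually_gt_at_top[of 0]
    by (intro landau_o.small.in_cong, eventually_elim)
      (simp add: algebra_simps sum_distrib_left powr_add[symmetric] powr_powr)
  also have "o(\<lambda>\<xi>. ?s \<xi> * ?g \<xi>) = o(?h)"
    using eventually_gt_at_top[of 0]
    by (intro landau_o.small.cong, eventually_elim)
      (simp add: powr_add[symmetric] powr_powr diff_divide_distrib)
  finally show ?thesis .
qed

lemma crit_points_eventually_eq:
  fixes R1 R2 q :: real and x1 x2 :: "real \<Rightarrow> real"
  assumes "\<forall>\<^sub>F \<xi> in at_top. 0 < x1 \<xi> \<and> R1 \<le> q * x1 \<xi> / \<xi> \<and> crit \<xi> (x1 \<xi>) \<and>
      (\<forall>z>0. R1 \<le> q * z / \<xi> \<and> crit \<xi> z \<longrightarrow> z = x1 \<xi>)"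
    and "\<forall>\<^sub>F \<xi> in at_top. 0 < x2 \<xi> \<and> R2 \<le> q * x2 \<xi> / \<xi> \<and> crit \<xi> (x2 \<xi>) \<and>
      (\<forall>z>0. R2 \<le> q * z / \<xi> \<and> crit \<xi> z \<longrightarrow> z = x2 \<xi>)"
  shows "\<forall>\<^sub>F \<xi> in at_top. x1 \<xi> = x2 \<xi>"
  using assms
proof eventually_elim
  case (elim \<xi>)
  then have x1: "0 < x1 \<xi>" "R1 \<le> q * x1 \<xi> / \<xi>" "crit \<xi> (x1 \<xi>)"
    and x2: "0 < x2 \<xi>" "R2 \<le> q * x2 \<xi> / \<xi>" "crit \<xi> (x2 \<xi>)"
    and unique1: "\<And>z. 0 < z \<Longrightarrow> R1 \<le> q * z / \<xi> \<Longrightarrow> crit \<xi> z \<Longrightarrow> z = x1 \<xi>"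
    and unique2: "\<And>z. 0 < z \<Longrightarrow> R2 \<le> q * z / \<xi> \<Longrightarrow> crit \<xi> z \<Longrightarrow> z = x2 \<xi>"
    by blast+
  show ?case
  proof (cases "R1 \<le> R2")
    case True
    then show ?thesis using unique1[OF x2(1) _ x2(3)] x2(2) by simp
  next
    case False
    with x1(2) have "R2 \<le> q * x1 \<xi> / \<xi>" by linarith
    then show ?thesis using unique2[OF x1(1) _ x1(3)] by simp
  qed
qed

lemma crit_expansion_unique:
  assumes tw: "is_twist f" and e: "d * lexp f - 1 > 0"
    and A: "crit_expansion d q f A" and B: "crit_expansion d q f B"
  shows "A = B"
proof -
  define e where "e = d * lexp f - 1"
  interpret exponent_scale "\<lambda>\<xi>. \<xi> powr (-1/e)" "Dset f" "min_gap f"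
    using exponent_scale_Dset[OF tw] e by (simp add: e_def)
  from A[unfolded crit_expansion_iff] obtain R1 x1 where
    A_supp: "\<forall>\<omega>. \<omega> \<notin> Dset f \<longrightarrow> A \<omega> = 0"
    and crit1: "\<forall>\<^sub>F \<xi> in at_top. 0 < x1 \<xi> \<and> R1 \<le> q * x1 \<xi> / \<xi> \<and>
      ((\<lambda>z. Phi_twist d q f z \<xi>) has_real_derivative 0) (at (x1 \<xi>)) \<and>
      (\<forall>z>0. R1 \<le> q * z / \<xi> \<and> ((\<lambda>z. Phi_twist d q f z \<xi>) has_real_derivative 0) (at z) \<longrightarrow> z = x1 \<xi>)"
    and exp1: "\<And>W. (\<lambda>\<xi>. Phi_twist d q f (x1 \<xi>) \<xi> / (2 * pi) - \<xi> powr (lexp f / e) *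
        (\<Sum>\<omega>\<in>{\<omega>\<in>Dset f. \<omega> \<le> W}. A \<omega> * \<xi> powr (- \<omega> / e))) \<in> o(\<lambda>\<xi>. \<xi> powr ((lexp f - W) / e))"
    unfolding e_def by blast
  from B[unfolded crit_expansion_iff] obtain R2 x2 where
    B_supp: "\<forall>\<omega>. \<omega> \<notin> Dset f \<longrightarrow> B \<omega> = 0"
    and crit2: "\<forall>\<^sub>F \<xi> in at_top. 0 < x2 \<xi> \<and> R2 \<le> q * x2 \<xi> / \<xi> \<and>
      ((\<lambda>z. Phi_twist d q f z \<xi>) has_real_derivative 0) (at (x2 \<xi>)) \<and>
      (\<forall>z>0. R2 \<le> q * z / \<xi> \<and> ((\<lambda>z. Phi_twist d q f z \<xi>) has_real_derivative 0) (at z) \<longrightarrow> z = x2 \<xi>)"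
    and exp2: "\<And>W. (\<lambda>\<xi>. Phi_twist d q f (x2 \<xi>) \<xi> / (2 * pi) - \<xi> powr (lexp f / e) *
        (\<Sum>\<omega>\<in>{\<omega>\<in>Dset f. \<omega> \<le> W}. B \<omega> * \<xi> powr (- \<omega> / e))) \<in> o(\<lambda>\<xi>. \<xi> powr ((lexp f - W) / e))"
    unfolding e_def by blast
  define G where "G \<xi> = \<xi> powr (- lexp f / e) * (Phi_twist d q f (x1 \<xi>) \<xi> / (2 * pi))" for \<xi>
  have x_eq: "\<forall>\<^sub>F \<xi> in at_top. x1 \<xi> = x2 \<xi>"
    by (rule crit_points_eventually_eq[OF crit1 crit2])
  show ?thesis
  proof (rule expansion_coeffs_unique[of A G B])
    show "(\<lambda>x. G x - (\<Sum>\<omega>\<in>{\<omega>\<in>Dset f. \<omega> \<le> W}. A \<omega> * (x powr (-1/e)) powr \<omega>))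
        \<in> o(\<lambda>x. (x powr (-1/e)) powr W)" for W
      using exp1[of W] unfolding G_def expansion_rescale_iff .
    have "(\<lambda>x. x powr (- lexp f / e) * (Phi_twist d q f (x2 x) x / (2 * pi))
        - (\<Sum>\<omega>\<in>{\<omega>\<in>Dset f. \<omega> \<le> W}. B \<omega> * (x powr (-1/e)) powr \<omega>)) \<in> o(\<lambda>x. (x powr (-1/e)) powr W)" for W
      using exp2[of W] unfolding expansion_rescale_iff .
    then show "(\<lambda>x. G x - (\<Sum>\<omega>\<in>{\<omega>\<in>Dset f. \<omega> \<le> W}. B \<omega> * (x powr (-1/e)) powr \<omega>))
        \<in> o(\<lambda>x. (x powr (-1/e)) powr W)" for W
      by (rule landau_o.small.in_cong[THEN iffD1, rotated])
        (use x_eq in \<open>auto simp: G_def elim: eventually_mono\<close>)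
  qed (use A_supp B_supp in auto)
qed

section \<open>Construction of the expansion\<close>

locale positive_twist =
  fixes d q :: real and f :: "real \<Rightarrow> real"
  assumes d_pos: "d > 0" and q_pos: "q > 0" and twist: "is_twist f"
    and lexp_gt: "lexp f > 1/d" and leading_pos: "f (lexp f) > 0"
begin

definition "k0 = lexp f"
definition "e = d * k0 - 1"
definition "beta = k0 - 1/d"
definition "a0 = f k0"
definition "c0 = q powr (-1/d) / (2 * pi * d)"

lemma finite_supp: "finite (tw_supp f)" using twist by (rule twist_finite_supp)
lemma k0_in_supp: "k0 \<in> tw_supp f" unfolding k0_def by (rule lexp_in_supp[OF twist])
lemma le_k0: "\<kappa> \<in> tw_supp f \<Longrightarrow> \<kappa> \<le> k0" unfolding k0_def by (rule le_lexp[OF twist])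
lemma beta_pos: "beta > 0" using lexp_gt by (simp add: beta_def k0_def)
lemma e_eq: "e = d * beta" using d_pos by (simp add: e_def beta_def field_simps)
lemma e_pos: "e > 0" using e_eq beta_pos d_pos by simp
lemma a0_pos: "a0 > 0" using leading_pos by (simp add: a0_def k0_def)
lemma k0_pos: "k0 > 0" using lexp_gt d_pos by (simp add: k0_def) (meson divide_pos_pos less_trans zero_less_one)
lemma a0_k0_pos: "a0 * k0 > 0" using a0_pos k0_pos by simp
lemma c0_pos: "c0 > 0" using q_pos d_pos by (simp add: c0_def)

text \<open>With u = q z / \<xi>, \<partial>\<Phi>/\<partial>z vanishes iff psi u = c0 \<xi>^(1/d).\<close>
definition psi :: "real \<Rightarrow> real" where
  "psi u = (\<Sum>\<kappa>\<in>tw_supp f. f \<kappa> * \<kappa> * u powr (\<kappa> - 1/d))"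
definition dpsi :: "real \<Rightarrow> real" where
  "dpsi u = (\<Sum>\<kappa>\<in>tw_supp f. f \<kappa> * \<kappa> * (\<kappa> - 1/d) * u powr (\<kappa> - 1/d - 1))"
definition psi_ratio :: "real \<Rightarrow> real" where
  "psi_ratio u = (\<Sum>\<kappa>\<in>tw_supp f. f \<kappa> * \<kappa> * u powr (\<kappa> - k0))"
definition dpsi_ratio :: "real \<Rightarrow> real" where
  "dpsi_ratio u = (\<Sum>\<kappa>\<in>tw_supp f. f \<kappa> * \<kappa> * (\<kappa> - 1/d) * u powr (\<kappa> - k0))"

lemma psi_deriv: "u > 0 \<Longrightarrow> DERIV psi u :> dpsi u"
  unfolding psi_def[abs_def] dpsi_def
  by (auto intro!: derivative_eq_intros simp: algebra_simps)

lemma psi_eq: "u > 0 \<Longrightarrow> psi u = u powr beta * psi_ratio u"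
  unfolding psi_def psi_ratio_def sum_distrib_left
  by (intro sum.cong refl) (simp add: beta_def powr_add[symmetric] algebra_simps)

lemma dpsi_eq: "u > 0 \<Longrightarrow> dpsi u = u powr (beta - 1) * dpsi_ratio u"
  unfolding dpsi_def dpsi_ratio_def sum_distrib_left
  by (intro sum.cong refl) (simp add: beta_def powr_add[symmetric] algebra_simps)

lemma tendsto_leading_coeff:
  "((\<lambda>u. \<Sum>\<kappa>\<in>tw_supp f. c \<kappa> * u powr (\<kappa> - k0)) \<longlongrightarrow> c k0) at_top"
proof -
  have "((\<lambda>u. \<Sum>\<kappa>\<in>tw_supp f. c \<kappa> * u powr (\<kappa> - k0))
      \<longlongrightarrow> (\<Sum>\<kappa>\<in>tw_supp f. if \<kappa> = k0 then c \<kappa> else 0)) at_top"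
  proof (intro tendsto_sum)
    fix \<kappa> assume \<kappa>: "\<kappa> \<in> tw_supp f"
    show "((\<lambda>u. c \<kappa> * u powr (\<kappa> - k0)) \<longlongrightarrow> (if \<kappa> = k0 then c \<kappa> else 0)) at_top"
    proof (cases "\<kappa> = k0")
      case True
      have "eventually (\<lambda>u. c \<kappa> = c \<kappa> * u powr (\<kappa> - k0)) at_top"
        using eventually_gt_at_top[of 0] by eventually_elim (simp add: True)
      from Lim_transform_eventually[OF tendsto_const this] True show ?thesis by simp
    next
      case False
      then have "\<kappa> - k0 < 0" using le_k0[OF \<kappa>] by simp
      then have "((\<lambda>u. c \<kappa> * u powr (\<kappa> - k0)) \<longlongrightarrow> c \<kappa> * 0) at_top"
        by (intro tendsto_mult tendsto_const tendsto_neg_powr filterlim_ident)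
      with False show ?thesis by simp
    qed
  qed
  also have "(\<Sum>\<kappa>\<in>tw_supp f. if \<kappa> = k0 then c \<kappa> else 0) = c k0"
    using finite_supp k0_in_supp by simp
  finally show ?thesis .
qed

lemma psi_ratio_tendsto: "(psi_ratio \<longlongrightarrow> a0 * k0) at_top"
  using tendsto_leading_coeff[of "\<lambda>\<kappa>. f \<kappa> * \<kappa>"] unfolding psi_ratio_def[abs_def] by (simp add: a0_def)

lemma dpsi_ratio_tendsto: "(dpsi_ratio \<longlongrightarrow> a0 * k0 * beta) at_top"
  using tendsto_leading_coeff[of "\<lambda>\<kappa>. f \<kappa> * \<kappa> * (\<kappa> - 1/d)"] unfolding dpsi_ratio_def[abs_def]
  by (simp add: a0_def beta_def)

text \<open>R0 \<ge> 1 is a threshold beyond which psi is increasing and comparable to u^beta.\<close>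
definition "R0 = (SOME R. R \<ge> 1 \<and>
    (\<forall>u\<ge>R. dpsi_ratio u > 0 \<and> psi_ratio u > a0 * k0 / 2 \<and> psi_ratio u < 2 * a0 * k0))"

lemma R0: "R0 \<ge> 1"
  "\<And>u. u \<ge> R0 \<Longrightarrow> dpsi_ratio u > 0 \<and> psi_ratio u > a0 * k0 / 2 \<and> psi_ratio u < 2 * a0 * k0"
proof -
  have "eventually (\<lambda>u. dpsi_ratio u > 0) at_top"
    using order_tendstoD(1)[OF dpsi_ratio_tendsto, of 0] a0_k0_pos beta_pos by simp
  moreover have "eventually (\<lambda>u. psi_ratio u > a0 * k0 / 2) at_top"
    using order_tendstoD(1)[OF psi_ratio_tendsto, of "a0 * k0 / 2"] a0_k0_pos by simp
  moreover have "eventually (\<lambda>u. psi_ratio u < 2 * a0 * k0) at_top"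
    using order_tendstoD(2)[OF psi_ratio_tendsto, of "2 * a0 * k0"] a0_k0_pos by simp
  ultimately have "eventually (\<lambda>u. dpsi_ratio u > 0 \<and> psi_ratio u > a0 * k0 / 2 \<and>
      psi_ratio u < 2 * a0 * k0) at_top"
    by eventually_elim blast
  then obtain R where "\<forall>u\<ge>R. dpsi_ratio u > 0 \<and> psi_ratio u > a0 * k0 / 2 \<and> psi_ratio u < 2 * a0 * k0"
    by (auto simp: eventually_at_top_linorder)
  then have "\<exists>R. R \<ge> 1 \<and> (\<forall>u\<ge>R. dpsi_ratio u > 0 \<and> psi_ratio u > a0 * k0 / 2 \<and>
      psi_ratio u < 2 * a0 * k0)"
    by (intro exI[of _ "max R 1"]) auto
  from someI_ex[OF this] show "R0 \<ge> 1"
    "\<And>u. u \<ge> R0 \<Longrightarrow> dpsi_ratio u > 0 \<and> psi_ratio u > a0 * k0 / 2 \<and> psi_ratio u < 2 * a0 * k0"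
    unfolding R0_def by blast+
qed

lemma psi_strict_mono: assumes "R0 \<le> u" "u < w" shows "psi u < psi w"
proof (rule DERIV_pos_imp_increasing[OF assms(2)])
  fix x assume "u \<le> x" "x \<le> w"
  then have "x \<ge> R0" using assms by simp
  moreover from this have "x > 0" using R0(1) by simp
  ultimately have "dpsi x > 0" using dpsi_eq R0(2) by simp
  with psi_deriv[OF \<open>x > 0\<close>] show "\<exists>y. DERIV psi x :> y \<and> y > 0" by blast
qed

lemma psi_bounds: assumes "R0 \<le> u"
  shows "a0 * k0 / 2 * u powr beta \<le> psi u" "psi u \<le> 2 * a0 * k0 * u powr beta"
proof -
  have "u > 0" using assms R0(1) by simp
  then have "psi u = psi_ratio u * u powr beta" "u powr beta > 0" using psi_eq by simp_all
  with R0(2)[OF assms] show "a0 * k0 / 2 * u powr beta \<le> psi u" "psi u \<le> 2 * a0 * k0 * u powr beta"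
    by (simp_all add: mult_right_mono less_imp_le)
qed

lemma psi_root_exists: assumes y: "psi R0 \<le> y" shows "\<exists>u. R0 \<le> u \<and> psi u = y"
proof -
  have "0 < a0 * k0 / 2 * R0 powr beta" using a0_k0_pos R0(1) by simp
  with psi_bounds(1)[of R0] y have y_pos: "y > 0" by simp
  define U where "U = max R0 ((2 * y / (a0 * k0)) powr (1 / beta))"
  have "((2 * y / (a0 * k0)) powr (1 / beta)) powr beta \<le> U powr beta"
    using beta_pos by (intro powr_mono2) (auto simp: U_def)
  also have "((2 * y / (a0 * k0)) powr (1 / beta)) powr beta = 2 * y / (a0 * k0)"
    using beta_pos y_pos a0_k0_pos by (simp add: powr_powr)
  finally have "y \<le> a0 * k0 / 2 * U powr beta"
    using a0_k0_pos by (simp add: field_simps)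
  also have "\<dots> \<le> psi U" by (rule psi_bounds(1)) (simp add: U_def)
  finally have "\<exists>u. R0 \<le> u \<and> u \<le> U \<and> psi u = y"
    using y R0(1)
    by (intro IVT) (auto simp: U_def intro!: DERIV_isCont[OF psi_deriv])
  then show ?thesis by blast
qed

lemma psi_inj: "R0 \<le> u \<Longrightarrow> R0 \<le> w \<Longrightarrow> psi u = psi w \<Longrightarrow> u = w"
  using psi_strict_mono[of u w] psi_strict_mono[of w u] by (cases u w rule: linorder_cases) auto

definition rho :: "real \<Rightarrow> real" where "rho \<xi> = c0 * \<xi> powr (1/d)"

lemma rho_at_top: "filterlim rho at_top at_top"
  unfolding rho_def[abs_def] using c0_pos d_pos
  by (intro filterlim_tendsto_pos_mult_at_top[OF tendsto_const _ real_powr_at_top]) simp_all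

definition dPhi :: "real \<Rightarrow> real \<Rightarrow> real" where
  "dPhi z \<xi> = z powr (1/d - 1) / d
     - 2 * pi * (\<Sum>\<kappa>\<in>tw_supp f. f \<kappa> * (\<kappa> * (q * z / \<xi>) powr (\<kappa> - 1) * (q / \<xi>)))"

lemma Phi_deriv: assumes "z > 0" "\<xi> > 0"
  shows "((\<lambda>z. Phi_twist d q f z \<xi>) has_real_derivative dPhi z \<xi>) (at z)"
proof -
  have "q * z / \<xi> > 0" using assms q_pos by simp
  then have "((\<lambda>z. z powr (1/d) - 2 * pi * (\<Sum>\<kappa>\<in>tw_supp f. f \<kappa> * (q * z / \<xi>) powr \<kappa>))
      has_real_derivative dPhi z \<xi>) (at z)"
    unfolding dPhi_def using assms(1) by (intro derivative_eq_intros refl) (auto simp: field_simps)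
  then show ?thesis by (simp add: Phi_twist_def[abs_def] tw_eval_def)
qed

lemma dPhi_eq: assumes z: "z > 0" and \<xi>: "\<xi> > 0"
  shows "dPhi z \<xi> = (q * z / \<xi>) powr (1/d - 1) * (2 * pi * (q / \<xi>)) * (rho \<xi> - psi (q * z / \<xi>))"
proof -
  define u where "u = q * z / \<xi>"
  have u: "u > 0" using z \<xi> q_pos by (simp add: u_def)
  have z_eq: "z = u * (\<xi> / q)" using q_pos \<xi> by (simp add: u_def field_simps)
  have z_powr: "z powr (1/d - 1) = u powr (1/d - 1) * (\<xi> / q) powr (1/d - 1)"
    unfolding z_eq using u \<xi> q_pos by (intro powr_mult)
  have "(\<xi> / q) powr (1/d - 1) = (\<xi> / q) powr (1/d + -1)" by simp
  also have "\<dots> = (\<xi> / q) powr (1/d) * (\<xi> / q) powr (-1)" by (rule powr_add)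
  also have "(\<xi> / q) powr (-1) = q / \<xi>" using \<xi> q_pos by (simp add: powr_minus)
  also have "(\<xi> / q) powr (1/d) = \<xi> powr (1/d) / q powr (1/d)"
    using \<xi> q_pos by (simp add: powr_divide)
  also have "\<dots> = \<xi> powr (1/d) * q powr (-1/d)" by (simp add: powr_minus divide_inverse)
  finally have rho_eq: "(\<xi> / q) powr (1/d - 1) / d = 2 * pi * (q / \<xi>) * rho \<xi>"
    using d_pos by (simp add: rho_def c0_def field_simps)
  have psi_eq: "(\<Sum>\<kappa>\<in>tw_supp f. f \<kappa> * (\<kappa> * u powr (\<kappa> - 1) * (q / \<xi>)))
      = (q / \<xi>) * u powr (1/d - 1) * psi u"
    unfolding psi_def sum_distrib_left
    by (intro sum.cong refl) (simp add: powr_add[symmetric] algebra_simps)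
  have "dPhi z \<xi> = u powr (1/d - 1) * ((\<xi> / q) powr (1/d - 1) / d)
      - 2 * pi * ((q / \<xi>) * u powr (1/d - 1) * psi u)"
    unfolding dPhi_def u_def[symmetric] z_powr psi_eq by simp
  also have "\<dots> = u powr (1/d - 1) * (2 * pi * (q / \<xi>)) * (rho \<xi> - psi u)"
    unfolding rho_eq by (simp add: algebra_simps diff_divide_distrib)
  finally show ?thesis by (simp add: u_def)
qed

lemma Phi_crit_iff: assumes "z > 0" "\<xi> > 0"
  shows "((\<lambda>z. Phi_twist d q f z \<xi>) has_real_derivative 0) (at z) \<longleftrightarrow> psi (q * z / \<xi>) = rho \<xi>"
proof -
  have "(q * z / \<xi>) powr (1/d - 1) * (2 * pi * (q / \<xi>)) > 0" using assms q_pos by simp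
  then have "dPhi z \<xi> = 0 \<longleftrightarrow> psi (q * z / \<xi>) = rho \<xi>"
    unfolding dPhi_eq[OF assms] by auto
  moreover have "((\<lambda>z. Phi_twist d q f z \<xi>) has_real_derivative 0) (at z) \<longleftrightarrow> dPhi z \<xi> = 0"
  proof
    assume "((\<lambda>z. Phi_twist d q f z \<xi>) has_real_derivative 0) (at z)"
    then show "dPhi z \<xi> = 0" using DERIV_unique[OF Phi_deriv[OF assms]] by blast
  next
    assume "dPhi z \<xi> = 0"
    then show "((\<lambda>z. Phi_twist d q f z \<xi>) has_real_derivative 0) (at z)" using Phi_deriv[OF assms] by simp
  qed
  ultimately show ?thesis by simp
qed

definition u_crit :: "real \<Rightarrow> real" where "u_crit \<xi> = (THE u. R0 \<le> u \<and> psi u = rho \<xi>)"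

lemma u_crit: assumes "psi R0 \<le> rho \<xi>"
  shows "R0 \<le> u_crit \<xi>" "psi (u_crit \<xi>) = rho \<xi>" "\<And>u. R0 \<le> u \<Longrightarrow> psi u = rho \<xi> \<Longrightarrow> u = u_crit \<xi>"
proof -
  obtain u where u: "R0 \<le> u" "psi u = rho \<xi>" using psi_root_exists[OF assms] by blast
  have ex1: "\<exists>!u. R0 \<le> u \<and> psi u = rho \<xi>"
  proof (rule ex1I[of _ u])
    show "\<And>w. R0 \<le> w \<and> psi w = rho \<xi> \<Longrightarrow> w = u" using psi_inj u by metis
  qed (use u in simp)
  from theI'[OF ex1] show "R0 \<le> u_crit \<xi>" "psi (u_crit \<xi>) = rho \<xi>" unfolding u_crit_def by blast+
  show "\<And>u. R0 \<le> u \<Longrightarrow> psi u = rho \<xi> \<Longrightarrow> u = u_crit \<xi>"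
    unfolding u_crit_def using the1_equality[OF ex1] by simp
qed

lemma eventually_u_crit: "eventually (\<lambda>\<xi>. \<xi> > 0 \<and> R0 \<le> u_crit \<xi> \<and> psi (u_crit \<xi>) = rho \<xi> \<and>
    (\<forall>u. R0 \<le> u \<and> psi u = rho \<xi> \<longrightarrow> u = u_crit \<xi>)) at_top"
proof -
  have "eventually (\<lambda>\<xi>. psi R0 \<le> rho \<xi>) at_top" using rho_at_top by (simp add: filterlim_at_top)
  with eventually_gt_at_top[of 0] show ?thesis by eventually_elim (use u_crit in blast)
qed

lemma u_crit_at_top: "filterlim u_crit at_top at_top"
  unfolding filterlim_at_top
proof
  fix Z :: real
  have "eventually (\<lambda>\<xi>. 2 * a0 * k0 * (max Z R0) powr beta < rho \<xi>) at_top"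
    using rho_at_top by (simp add: filterlim_at_top_dense)
  with eventually_u_crit show "eventually (\<lambda>\<xi>. Z \<le> u_crit \<xi>) at_top"
  proof eventually_elim
    case (elim \<xi>)
    show ?case
    proof (rule ccontr)
      assume "\<not> Z \<le> u_crit \<xi>"
      then have "u_crit \<xi> powr beta \<le> (max Z R0) powr beta"
        using elim R0(1) beta_pos by (intro powr_mono2) auto
      then have "2 * a0 * k0 * u_crit \<xi> powr beta \<le> 2 * a0 * k0 * (max Z R0) powr beta"
        using a0_k0_pos by (intro mult_left_mono) auto
      moreover have "psi (u_crit \<xi>) \<le> 2 * a0 * k0 * u_crit \<xi> powr beta"
        using elim by (intro psi_bounds(2)) simp
      ultimately show False using elim by simp
    qed
  qed
qed

definition scale :: "real \<Rightarrow> real" where "scale \<xi> = \<xi> powr (-1/e)"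

lemma exponent_scale: "exponent_scale scale (Dset f) (min_gap f)"
  using exponent_scale_Dset[OF twist e_pos] by (simp add: scale_def[abs_def])

end

sublocale positive_twist \<subseteq> D: exponent_scale scale "Dset f" "min_gap f"
  by (rule exponent_scale)

context positive_twist
begin

lemma scale_pos: "\<xi> > 0 \<Longrightarrow> scale \<xi> > 0" by (simp add: scale_def)

lemma scale_powr_beta: "\<xi> > 0 \<Longrightarrow> scale \<xi> powr beta = \<xi> powr (-1/d)"
  using e_eq d_pos beta_pos by (simp add: scale_def powr_powr)

lemma powr_over_e_eq_scale_powr: "\<xi> > 0 \<Longrightarrow> \<xi> powr (a / e) = scale \<xi> powr (- a)"
  using e_pos by (simp add: scale_def powr_powr)

text \<open>v is u_crit measured in the scale; it tends to v0, the root of a0 k0 v^beta = c0.\<close>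
definition v :: "real \<Rightarrow> real" where "v \<xi> = u_crit \<xi> * scale \<xi>"
definition "v0 = (c0 / (a0 * k0)) powr (1 / beta)"

lemma v0_pos: "v0 > 0" using c0_pos a0_pos k0_pos by (simp add: v0_def)

lemma eventually_v: "eventually (\<lambda>\<xi>. v \<xi> > 0 \<and> v \<xi> powr beta = c0 / psi_ratio (u_crit \<xi>)) at_top"
  using eventually_u_crit
proof eventually_elim
  case (elim \<xi>)
  define u where "u = u_crit \<xi>"
  have \<xi>: "\<xi> > 0" and u: "R0 \<le> u" "psi u = rho \<xi>" using elim by (auto simp: u_def)
  have u_pos: "u > 0" using u R0(1) by simp
  have "psi_ratio u > 0" using R0(2)[OF u(1)] a0_k0_pos by linarith
  have "v \<xi> powr beta = u powr beta * \<xi> powr (-1/d)"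
    using u_pos scale_pos[OF \<xi>] by (simp add: v_def u_def powr_mult scale_powr_beta[OF \<xi>])
  also have "u powr beta = rho \<xi> / psi_ratio u"
    using psi_eq[OF u_pos] u(2) \<open>psi_ratio u > 0\<close> by (simp add: field_simps)
  also have "rho \<xi> / psi_ratio u * \<xi> powr (-1/d) = c0 * (\<xi> powr (1/d) * \<xi> powr (-1/d)) / psi_ratio u"
    by (simp add: rho_def)
  also have "\<xi> powr (1/d) * \<xi> powr (-1/d) = 1" using \<xi> by (simp add: powr_add[symmetric])
  finally show ?case using u_pos scale_pos[OF \<xi>] by (simp add: v_def u_def)
qed

lemma v_tendsto: "(v \<longlongrightarrow> v0) at_top"
proof -
  have "((\<lambda>\<xi>. c0 / psi_ratio (u_crit \<xi>)) \<longlongrightarrow> c0 / (a0 * k0)) at_top"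
    using a0_k0_pos by (intro tendsto_divide tendsto_const filterlim_compose[OF psi_ratio_tendsto u_crit_at_top]) auto
  then have "((\<lambda>\<xi>. (c0 / psi_ratio (u_crit \<xi>)) powr (1 / beta)) \<longlongrightarrow> v0) at_top"
    unfolding v0_def using c0_pos a0_k0_pos by (intro tendsto_powr tendsto_const) auto
  moreover have "eventually (\<lambda>\<xi>. (c0 / psi_ratio (u_crit \<xi>)) powr (1 / beta) = v \<xi>) at_top"
    using eventually_v
  proof eventually_elim
    case (elim \<xi>)
    then have "(c0 / psi_ratio (u_crit \<xi>)) powr (1 / beta) = (v \<xi> powr beta) powr (1 / beta)"
      by simp
    also have "\<dots> = v \<xi> powr (beta * (1 / beta))" by (rule powr_powr)
    also have "\<dots> = v \<xi>" using elim beta_pos by simp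
    finally show ?case .
  qed
  ultimately show ?thesis by (rule Lim_transform_eventually)
qed

lemma v_powr_tendsto: "((\<lambda>\<xi>. v \<xi> powr a) \<longlongrightarrow> v0 powr a) at_top"
  using v0_pos by (intro tendsto_powr v_tendsto tendsto_const) auto

text \<open>The critical-point equation psi(u) = rho(\<xi>) rewritten in terms of v and the scale.\<close>
definition lower_terms :: "real \<Rightarrow> real" where
  "lower_terms \<xi> = (\<Sum>\<kappa>\<in>tw_supp f - {k0}. f \<kappa> * \<kappa> * (scale \<xi> powr (k0 - \<kappa>) * v \<xi> powr (\<kappa> - 1/d)))"

lemma u_crit_powr_eq:
  assumes "\<xi> > 0" "R0 \<le> u_crit \<xi>"
  shows "u_crit \<xi> powr a = scale \<xi> powr (- a) * v \<xi> powr a"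
proof -
  have s: "scale \<xi> > 0" using assms scale_pos by simp
  moreover have "u_crit \<xi> > 0" using assms R0(1) by simp
  ultimately have "v \<xi> > 0" "u_crit \<xi> = v \<xi> / scale \<xi>" by (simp_all add: v_def)
  then have "u_crit \<xi> powr a = v \<xi> powr a / scale \<xi> powr a" using s by (simp add: powr_divide)
  then show ?thesis by (simp add: powr_minus divide_inverse)
qed

lemma eventually_v_equation: "eventually (\<lambda>\<xi>. a0 * k0 * v \<xi> powr beta + lower_terms \<xi> = c0) at_top"
  using eventually_u_crit
proof eventually_elim
  case (elim \<xi>)
  then have \<xi>: "\<xi> > 0" and u: "R0 \<le> u_crit \<xi>" "psi (u_crit \<xi>) = rho \<xi>" by blast+
  have scale_inv: "scale \<xi> powr (- (\<kappa> - 1/d)) = \<xi> powr (1/d) * scale \<xi> powr (k0 - \<kappa>)" for \<kappa>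
  proof -
    have "scale \<xi> powr (- (\<kappa> - 1/d)) = scale \<xi> powr (- beta) * scale \<xi> powr (k0 - \<kappa>)"
      by (simp add: beta_def powr_add[symmetric])
    also have "scale \<xi> powr (- beta) = \<xi> powr (1/d)"
      using scale_powr_beta[OF \<xi>] scale_pos[OF \<xi>] \<xi> by (simp add: powr_minus)
    finally show ?thesis .
  qed
  have "rho \<xi> = \<xi> powr (1/d) * (\<Sum>\<kappa>\<in>tw_supp f. f \<kappa> * \<kappa> * (scale \<xi> powr (k0 - \<kappa>) * v \<xi> powr (\<kappa> - 1/d)))"
    unfolding u(2)[symmetric] psi_def sum_distrib_left u_crit_powr_eq[OF \<xi> u(1)] scale_inv
    by (intro sum.cong refl) (simp add: algebra_simps)
  also have "(\<Sum>\<kappa>\<in>tw_supp f. f \<kappa> * \<kappa> * (scale \<xi> powr (k0 - \<kappa>) * v \<xi> powr (\<kappa> - 1/d)))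
      = a0 * k0 * v \<xi> powr beta + lower_terms \<xi>"
    unfolding lower_terms_def using finite_supp k0_in_supp scale_pos[OF \<xi>]
    by (simp add: sum.remove a0_def beta_def)
  finally show ?case using \<xi> by (simp add: rho_def)
qed

lemma lower_terms_tendsto_0: "(lower_terms \<longlongrightarrow> 0) at_top"
proof -
  have "(lower_terms \<longlongrightarrow> (\<Sum>\<kappa>\<in>tw_supp f - {k0}. f \<kappa> * \<kappa> * (0 * v0 powr (\<kappa> - 1/d)))) at_top"
    unfolding lower_terms_def[abs_def]
  proof (intro tendsto_sum tendsto_mult tendsto_const v_powr_tendsto)
    fix \<kappa> assume "\<kappa> \<in> tw_supp f - {k0}"
    then have "k0 - \<kappa> > 0" using le_k0[of \<kappa>] by auto
    then show "((\<lambda>\<xi>. scale \<xi> powr (k0 - \<kappa>)) \<longlongrightarrow> 0) at_top" by (rule D.scale_powr_tendsto_0)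
  qed
  then show ?thesis by simp
qed

lemma expandable_lower_terms:
  assumes "\<And>a. D.expandable N (\<lambda>\<xi>. v \<xi> powr a)"
  shows "D.expandable (Suc N) lower_terms"
  unfolding lower_terms_def[abs_def]
proof (intro D.expandable_sum D.expandable_cmult)
  fix \<kappa> assume \<kappa>: "\<kappa> \<in> tw_supp f - {k0}"
  then have "k0 - \<kappa> \<in> Dset f" "k0 - \<kappa> \<noteq> 0"
    using lexp_minus_in_Dset[OF twist] by (auto simp: k0_def)
  then show "D.expandable (Suc N) (\<lambda>\<xi>. scale \<xi> powr (k0 - \<kappa>) * v \<xi> powr (\<kappa> - 1/d))"
    using assms by (rule D.expandable_monom_Suc)
qed (simp add: finite_supp)

lemma v_eq_binomial: "eventually (\<lambda>\<xi>. v0 * (1 + (- 1 / c0) * lower_terms \<xi>) powr (1 / beta) = v \<xi>) at_top"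
  using eventually_v_equation eventually_v
proof eventually_elim
  case (elim \<xi>)
  have "v \<xi> powr beta = (c0 - lower_terms \<xi>) / (a0 * k0)"
    using elim(1) a0_pos k0_pos by (simp add: field_simps)
  also have "\<dots> = (c0 / (a0 * k0)) * (1 + (- 1 / c0) * lower_terms \<xi>)"
    using c0_pos a0_pos k0_pos by (simp add: field_simps)
  finally have v_beta: "v \<xi> powr beta = (c0 / (a0 * k0)) * (1 + (- 1 / c0) * lower_terms \<xi>)" .
  have "(c0 / (a0 * k0)) * (1 + (- 1 / c0) * lower_terms \<xi>) > 0"
    using elim(2) v_beta by (metis powr_gt_zero less_irrefl)
  moreover have "c0 / (a0 * k0) > 0" using a0_k0_pos c0_pos by simp
  ultimately have pos: "1 + (- 1 / c0) * lower_terms \<xi> > 0" by (rule zero_less_mult_pos)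
  have "v \<xi> = (v \<xi> powr beta) powr (1 / beta)"
    using conjunct1[OF elim(2)] beta_pos by (simp add: powr_powr)
  also have "\<dots> = v0 * (1 + (- 1 / c0) * lower_terms \<xi>) powr (1 / beta)"
    unfolding v_beta v0_def using pos a0_k0_pos c0_pos by (intro powr_mult)
  finally show ?case ..
qed

lemma expandable_v_powr_if_expandable_v:
  assumes "N > 0" "D.expandable N v" shows "D.expandable N (\<lambda>\<xi>. v \<xi> powr a)"
proof -
  define h where "h \<xi> = (1 / v0) * (v \<xi> - v0)" for \<xi>
  have "D.expandable N h"
    unfolding h_def by (intro D.expandable_cmult D.expandable_diff assms(2) D.expandable_const)
  moreover have "((\<lambda>\<xi>. v \<xi> - v0) \<longlongrightarrow> 0) at_top"
    using tendsto_diff[OF v_tendsto tendsto_const[of v0]] by simp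
  then have "(h \<longlongrightarrow> 0) at_top" unfolding h_def[abs_def] by (rule tendsto_mult_right_zero)
  ultimately have "D.expandable N (\<lambda>\<xi>. v0 powr a * (1 + h \<xi>) powr a)"
    by (intro D.expandable_cmult D.expandable_one_plus_powr assms(1))
  moreover have "eventually (\<lambda>\<xi>. v0 powr a * (1 + h \<xi>) powr a = v \<xi> powr a) at_top"
    using eventually_v
  proof eventually_elim
    case (elim \<xi>)
    have "1 + h \<xi> = v \<xi> / v0" using v0_pos by (simp add: h_def field_simps)
    then show ?case using elim v0_pos by (simp add: powr_divide)
  qed
  ultimately show ?thesis by (rule D.expandable_cong)
qed

text \<open>Each order gained for v improves lower_terms by one order, via the monomials
  scale^(k0 - \<kappa>) with k0 - \<kappa> \<ge> min_gap f.\<close>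
lemma expandable_v_powr: "D.expandable N (\<lambda>\<xi>. v \<xi> powr a)"
proof (induction N arbitrary: a)
  case 0
  have "((\<lambda>\<xi>. v \<xi> powr a / 1) \<longlongrightarrow> v0 powr a) at_top" using v_powr_tendsto by simp
  then have "(\<lambda>\<xi>. v \<xi> powr a) \<in> O(\<lambda>_. 1)" by (rule bigoI_tendsto) simp
  then show ?case by (rule D.expandable_0)
next
  case (Suc N)
  have "D.expandable (Suc N) lower_terms" by (rule expandable_lower_terms[OF Suc.IH])
  then have "D.expandable (Suc N) (\<lambda>\<xi>. v0 * (1 + (- 1 / c0) * lower_terms \<xi>) powr (1 / beta))"
    using tendsto_mult[OF tendsto_const lower_terms_tendsto_0, of "- 1 / c0"]
    by (intro D.expandable_cmult D.expandable_one_plus_powr) simp_all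
  then have "D.expandable (Suc N) v" using v_eq_binomial by (rule D.expandable_cong)
  then show ?case by (intro expandable_v_powr_if_expandable_v) simp_all
qed

text \<open>\<xi>^(-k0/e) \<Phi>(x0(\<xi>), \<xi>) / 2\<pi>, expressed through v and the scale.\<close>
definition Phi_normalized :: "real \<Rightarrow> real" where
  "Phi_normalized \<xi> = (1 / (2 * pi * q powr (1/d))) * v \<xi> powr (1/d)
     - (\<Sum>\<kappa>\<in>tw_supp f. f \<kappa> * (scale \<xi> powr (k0 - \<kappa>) * v \<xi> powr \<kappa>))"

lemma expandable_Phi_normalized: "D.expandable N Phi_normalized"
  unfolding Phi_normalized_def[abs_def]
proof (intro D.expandable_diff D.expandable_cmult D.expandable_sum expandable_v_powr)
  fix \<kappa> assume "\<kappa> \<in> tw_supp f"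
  then have "k0 - \<kappa> \<in> Dset f" using lexp_minus_in_Dset[OF twist] by (simp add: k0_def)
  then show "D.expandable N (\<lambda>\<xi>. scale \<xi> powr (k0 - \<kappa>) * v \<xi> powr \<kappa>)"
    by (rule D.expandable_monom[OF _ expandable_v_powr])
qed (simp add: finite_supp)

definition "A0 = (1 / (2 * pi * q powr (1/d))) * v0 powr (1/d) - a0 * v0 powr k0"

lemma Phi_normalized_tendsto: "(Phi_normalized \<longlongrightarrow> A0) at_top"
proof -
  have "((\<lambda>\<xi>. f \<kappa> * (scale \<xi> powr (k0 - \<kappa>) * v \<xi> powr \<kappa>))
      \<longlongrightarrow> (if \<kappa> = k0 then f k0 * v0 powr k0 else 0)) at_top"
    if \<kappa>: "\<kappa> \<in> tw_supp f" for \<kappa>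
  proof (cases "\<kappa> = k0")
    case True
    have "eventually (\<lambda>\<xi>. f \<kappa> * v \<xi> powr \<kappa> = f \<kappa> * (scale \<xi> powr (k0 - \<kappa>) * v \<xi> powr \<kappa>)) at_top"
      using eventually_gt_at_top[of 0]
      by eventually_elim (simp add: True scale_pos less_imp_neq[symmetric])
    with True show ?thesis
      using Lim_transform_eventually[OF tendsto_mult[OF tendsto_const v_powr_tendsto]] by simp
  next
    case False
    then have "k0 - \<kappa> > 0" using le_k0[OF \<kappa>] by simp
    then have "((\<lambda>\<xi>. f \<kappa> * (scale \<xi> powr (k0 - \<kappa>) * v \<xi> powr \<kappa>)) \<longlongrightarrow> f \<kappa> * (0 * v0 powr \<kappa>)) at_top"
      by (intro tendsto_mult tendsto_const v_powr_tendsto D.scale_powr_tendsto_0)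
    with False show ?thesis by simp
  qed
  then have "(Phi_normalized \<longlongrightarrow> (1 / (2 * pi * q powr (1/d))) * v0 powr (1/d)
      - (\<Sum>\<kappa>\<in>tw_supp f. if \<kappa> = k0 then f k0 * v0 powr k0 else 0)) at_top"
    unfolding Phi_normalized_def[abs_def]
    by (intro tendsto_diff tendsto_mult tendsto_const v_powr_tendsto tendsto_sum)
  then show ?thesis using finite_supp k0_in_supp by (simp add: a0_def A0_def)
qed

text \<open>Since a0 k0 v0^beta = c0, A0 = v0^(1/d) (1 - 1/(d k0)) / (2\<pi> q^(1/d)).\<close>
lemma A0_pos: "A0 > 0"
proof -
  define C where "C = 1 / (2 * pi * q powr (1/d))"
  define X where "X = c0 / (a0 * k0)"
  have "X > 0" using a0_k0_pos c0_pos by (simp add: X_def)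
  have "v0 powr beta = X powr ((1 / beta) * beta)" unfolding v0_def X_def[symmetric] by (rule powr_powr)
  also have "(1 / beta) * beta = 1" using beta_pos by simp
  finally have "v0 powr beta = X" using \<open>X > 0\<close> by simp
  have "v0 powr k0 = v0 powr (1/d + beta)" by (simp add: beta_def)
  also have "\<dots> = v0 powr (1/d) * v0 powr beta" by (rule powr_add)
  finally have v0_k0: "v0 powr k0 = v0 powr (1/d) * X" using \<open>v0 powr beta = X\<close> by simp
  have "a0 * X = c0 / k0" using a0_pos k0_pos by (simp add: X_def field_simps)
  also have "c0 / k0 = C * (1 / (d * k0))"
  proof -
    have "q powr (-1/d) = 1 / q powr (1/d)" by (simp add: powr_minus divide_inverse)
    then show ?thesis by (simp add: c0_def C_def field_simps)
  qed
  finally have a0_X: "a0 * X = C * (1 / (d * k0))" .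
  have "A0 = C * v0 powr (1/d) - v0 powr (1/d) * (a0 * X)"
    by (simp add: A0_def C_def v0_k0 algebra_simps)
  also have "\<dots> = C * v0 powr (1/d) * (1 - 1 / (d * k0))"
    unfolding a0_X by (simp add: algebra_simps)
  finally have "A0 = C * v0 powr (1/d) * (1 - 1 / (d * k0))" .
  moreover have "1 / (d * k0) < 1" using lexp_gt d_pos by (simp add: k0_def field_simps)
  moreover have "C > 0" using q_pos by (simp add: C_def)
  ultimately show ?thesis using v0_pos by simp
qed

lemma Phi_at_crit:
  assumes \<xi>: "\<xi> > 0" and u: "R0 \<le> u_crit \<xi>"
  shows "Phi_twist d q f (u_crit \<xi> * \<xi> / q) \<xi> / (2 * pi) = scale \<xi> powr (- k0) * Phi_normalized \<xi>"
proof -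
  have s: "scale \<xi> > 0" using scale_pos[OF \<xi>] .
  have v: "v \<xi> > 0" using u R0(1) s by (simp add: v_def)
  have "\<xi> powr (1/d) = scale \<xi> powr (- e / d)"
    using powr_over_e_eq_scale_powr[OF \<xi>, of "e / d"] e_pos d_pos by simp
  then have "(u_crit \<xi> * \<xi> / q) powr (1/d)
      = scale \<xi> powr (- 1 / d) * v \<xi> powr (1/d) * scale \<xi> powr (- e / d) / q powr (1/d)"
    using u_crit_powr_eq[OF \<xi> u, of "1/d"] u R0(1) \<xi> q_pos
    by (simp add: powr_mult powr_divide)
  also have "\<dots> = scale \<xi> powr (- k0) * (v \<xi> powr (1/d) / q powr (1/d))"
    using d_pos by (simp add: powr_add[symmetric] e_def field_simps)
  finally have first: "(u_crit \<xi> * \<xi> / q) powr (1/d) = scale \<xi> powr (- k0) * (v \<xi> powr (1/d) / q powr (1/d))" .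
  have "tw_eval f (u_crit \<xi>) = scale \<xi> powr (- k0) * (\<Sum>\<kappa>\<in>tw_supp f. f \<kappa> * (scale \<xi> powr (k0 - \<kappa>) * v \<xi> powr \<kappa>))"
    unfolding tw_eval_def sum_distrib_left u_crit_powr_eq[OF \<xi> u]
    by (intro sum.cong refl) (simp add: powr_add[symmetric] algebra_simps)
  moreover have "q * (u_crit \<xi> * \<xi> / q) / \<xi> = u_crit \<xi>" using q_pos \<xi> by simp
  ultimately show ?thesis
    unfolding Phi_twist_def first Phi_normalized_def by (simp add: field_simps)
qed

lemma eventually_crit_point:
  "\<forall>\<^sub>F \<xi> in at_top. 0 < u_crit \<xi> * \<xi> / q \<and> R0 \<le> q * (u_crit \<xi> * \<xi> / q) / \<xi> \<and>
     ((\<lambda>z. Phi_twist d q f z \<xi>) has_real_derivative 0) (at (u_crit \<xi> * \<xi> / q)) \<and>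
     (\<forall>z>0. R0 \<le> q * z / \<xi> \<and> ((\<lambda>z. Phi_twist d q f z \<xi>) has_real_derivative 0) (at z)
        \<longrightarrow> z = u_crit \<xi> * \<xi> / q)"
  using eventually_u_crit
proof eventually_elim
  case (elim \<xi>)
  then have \<xi>: "\<xi> > 0" and u: "R0 \<le> u_crit \<xi>" "psi (u_crit \<xi>) = rho \<xi>"
    and unique: "\<And>u. R0 \<le> u \<Longrightarrow> psi u = rho \<xi> \<Longrightarrow> u = u_crit \<xi>" by blast+
  have q_x0: "q * (u_crit \<xi> * \<xi> / q) / \<xi> = u_crit \<xi>" using q_pos \<xi> by simp
  have x0_pos: "0 < u_crit \<xi> * \<xi> / q" using u(1) R0(1) \<xi> q_pos by simp
  have "z = u_crit \<xi> * \<xi> / q"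
    if "z > 0" "R0 \<le> q * z / \<xi>" "((\<lambda>z. Phi_twist d q f z \<xi>) has_real_derivative 0) (at z)" for z
  proof -
    have "q * z / \<xi> = u_crit \<xi>" using unique that Phi_crit_iff[OF that(1) \<xi>] by blast
    then show ?thesis using q_pos \<xi> by (simp add: field_simps)
  qed
  with x0_pos u Phi_crit_iff[OF x0_pos \<xi>] show ?case unfolding q_x0 by blast
qed

lemma crit_expansion_exists: "\<exists>A. crit_expansion d q f A"
proof -
  obtain A where A_supp: "\<forall>\<omega>. \<omega> \<notin> Dset f \<longrightarrow> A \<omega> = 0"
    and A_exp: "\<forall>W. (\<lambda>\<xi>. Phi_normalized \<xi> - (\<Sum>\<omega>\<in>{\<omega>\<in>Dset f. \<omega> \<le> W}. A \<omega> * scale \<xi> powr \<omega>))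
        \<in> o(\<lambda>\<xi>. scale \<xi> powr W)"
    using D.expansion_exists[OF expandable_Phi_normalized] by blast
  have "A 0 = A0" by (rule D.expansion_coeff_0_eq_limit[OF spec[OF A_exp] Phi_normalized_tendsto])
  define x0 where "x0 \<xi> = u_crit \<xi> * \<xi> / q" for \<xi>
  have Phi_eq: "eventually (\<lambda>\<xi>. Phi_normalized \<xi> = \<xi> powr (- k0 / e) * (Phi_twist d q f (x0 \<xi>) \<xi> / (2 * pi))) at_top"
    using eventually_u_crit
  proof eventually_elim
    case (elim \<xi>)
    then have "\<xi> powr (- k0 / e) * (Phi_twist d q f (x0 \<xi>) \<xi> / (2 * pi))
        = scale \<xi> powr k0 * scale \<xi> powr (- k0) * Phi_normalized \<xi>"
      using powr_over_e_eq_scale_powr[of \<xi> "- k0"] by (simp add: x0_def Phi_at_crit)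
    also have "\<dots> = Phi_normalized \<xi>"
      using scale_pos[of \<xi>] elim by (simp add: powr_add[symmetric] less_imp_neq[symmetric])
    finally show ?case ..
  qed
  have "(\<lambda>\<xi>. \<xi> powr (- k0 / e) * (Phi_twist d q f (x0 \<xi>) \<xi> / (2 * pi))
      - (\<Sum>\<omega>\<in>{\<omega>\<in>Dset f. \<omega> \<le> W}. A \<omega> * (\<xi> powr (-1/e)) powr \<omega>)) \<in> o(\<lambda>\<xi>. (\<xi> powr (-1/e)) powr W)"
    for W
  proof -
    let ?S = "\<lambda>\<xi>. \<Sum>\<omega>\<in>{\<omega>\<in>Dset f. \<omega> \<le> W}. A \<omega> * (\<xi> powr (-1/e)) powr \<omega>"
    have "eventually (\<lambda>\<xi>. Phi_normalized \<xi> - ?S \<xi>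
        = \<xi> powr (- k0 / e) * (Phi_twist d q f (x0 \<xi>) \<xi> / (2 * pi)) - ?S \<xi>) at_top"
      using Phi_eq by eventually_elim simp
    from landau_o.small.in_cong[OF this] spec[OF A_exp, of W] show ?thesis
      unfolding scale_def by simp
  qed
  then have "(\<lambda>\<xi>. Phi_twist d q f (x0 \<xi>) \<xi> / (2 * pi) - \<xi> powr (k0 / e) *
        (\<Sum>\<omega>\<in>{\<omega>\<in>Dset f. \<omega> \<le> W}. A \<omega> * \<xi> powr (- \<omega> / e))) \<in> o(\<lambda>\<xi>. \<xi> powr ((k0 - W) / e))" for W
    unfolding expansion_rescale_iff .
  note expansion = this
  have "crit_expansion d q f A"
    unfolding crit_expansion_iff k0_def[symmetric] e_def[symmetric]
  proof (intro conjI exI[of _ R0] exI[of _ x0] allI)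
    show "A 0 \<noteq> 0" using \<open>A 0 = A0\<close> A0_pos by simp
  qed (use A_supp eventually_crit_point expansion in \<open>simp_all add: x0_def\<close>)
  then show ?thesis by blast
qed

end

section \<open>T\<flat> on twist functions of large leading exponent\<close>

definition lead_pos :: "(real \<Rightarrow> real) \<Rightarrow> (real \<Rightarrow> real)" where
  "lead_pos f = (if 0 < f (lexp f) then f else (\<lambda>\<kappa>. - f \<kappa>))"

lemma lead_pos_props:
  assumes "is_twist f"
  shows "is_twist (lead_pos f)" "lexp (lead_pos f) = lexp f" "lead_pos f (lexp (lead_pos f)) > 0"
    "Dset (lead_pos f) = Dset f"
proof -
  have "f (lexp f) \<noteq> 0" using lexp_in_supp[OF assms] by (simp add: tw_supp_def)
  then show "lead_pos f (lexp (lead_pos f)) > 0" by (auto simp: lead_pos_def)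
qed (use assms in \<open>simp_all add: lead_pos_def\<close>)

lemma ex1_crit_expansion_lead_pos:
  assumes d: "d > 0" and q: "q > 0" and tw: "is_twist f" and gt: "lexp f > 1/d"
  shows "\<exists>!A. crit_expansion d q (lead_pos f) A"
proof -
  interpret positive_twist d q "lead_pos f"
    using lead_pos_props[OF tw] d q gt by unfold_locales simp_all
  have "d * lexp (lead_pos f) - 1 > 0" using gt d lead_pos_props(2)[OF tw] by (simp add: field_simps)
  then show ?thesis
    using crit_expansion_exists crit_expansion_unique[OF lead_pos_props(1)[OF tw]] by blast
qed

lemma Tflat_defined_if_lexp_gt:
  assumes "d > 0" "q > 0" "is_twist f" "lexp f > 1/d"
  shows "Tflat_defined d q f"
  using ex1_crit_expansion_lead_pos[OF assms] assms(3,4)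
  unfolding Tflat_defined_def lead_pos_def by simp

text \<open>The exponent attached to \<omega> \<in> D_f is (\<kappa>0 - \<omega>)/(d \<kappa>0 - 1) \<le> \<kappa>0/(d \<kappa>0 - 1).\<close>
lemma Tflat_supp_bounded:
  assumes d: "d > 0" and q: "q > 0" and tw: "is_twist f" and gt: "lexp f > 1/d"
  shows "finite (tw_supp (Tflat d q f))"
    and "\<And>\<epsilon>. \<epsilon> \<in> tw_supp (Tflat d q f) \<Longrightarrow> 0 \<le> \<epsilon> \<and> \<epsilon> \<le> lexp f / (d * lexp f - 1)"
proof -
  define e where "e = d * lexp f - 1"
  have e: "e > 0" using gt d by (simp add: e_def field_simps)
  define A where "A = (THE A. crit_expansion d q (lead_pos f) A)"
  have "crit_expansion d q (lead_pos f) A"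
    unfolding A_def by (rule theI'[OF ex1_crit_expansion_lead_pos[OF assms]])
  then have A_supp: "\<And>\<omega>. \<omega> \<notin> Dset f \<Longrightarrow> A \<omega> = 0"
    using lead_pos_props(4)[OF tw] unfolding crit_expansion_iff by auto
  have "tw_supp (Tflat d q f) = tw_supp (Tflat_pos d q (lead_pos f))"
    unfolding tw_supp_def Tflat_def lead_pos_def by auto
  also have "\<dots> \<subseteq> (\<lambda>\<omega>. (lexp f - \<omega>) / e) ` {\<omega>\<in>Dset f. \<omega> \<le> lexp f}"
  proof
    fix \<epsilon> assume "\<epsilon> \<in> tw_supp (Tflat_pos d q (lead_pos f))"
    then have "0 \<le> \<epsilon>" "A (lexp f - \<epsilon> * e) \<noteq> 0"
      unfolding tw_supp_def Tflat_pos_def Let_def A_def[symmetric] lead_pos_props(2)[OF tw] e_def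
      by (auto split: if_splits)
    moreover have "\<epsilon> = (lexp f - (lexp f - \<epsilon> * e)) / e" using e by simp
    ultimately show "\<epsilon> \<in> (\<lambda>\<omega>. (lexp f - \<omega>) / e) ` {\<omega>\<in>Dset f. \<omega> \<le> lexp f}"
      using A_supp e by (intro image_eqI) auto
  qed
  finally have supp: "tw_supp (Tflat d q f) \<subseteq> (\<lambda>\<omega>. (lexp f - \<omega>) / e) ` {\<omega>\<in>Dset f. \<omega> \<le> lexp f}" .
  then show "finite (tw_supp (Tflat d q f))"
    by (rule finite_subset) (intro finite_imageI finite_Dset_le[OF tw])
  fix \<epsilon> assume "\<epsilon> \<in> tw_supp (Tflat d q f)"
  with supp obtain \<omega> where "\<omega> \<in> Dset f" "\<omega> \<le> lexp f" "\<epsilon> = (lexp f - \<omega>) / e" by blast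
  with Dset_nonneg[OF tw] e show "0 \<le> \<epsilon> \<and> \<epsilon> \<le> lexp f / (d * lexp f - 1)"
    by (auto simp: e_def divide_right_mono)
qed

text \<open>Here \<kappa>0/(d \<kappa>0 - 1) < 1 because \<kappa>0 (d - 1) > 1; this is where d > 2 is needed.\<close>
lemma Tflat_supp_less_1:
  assumes d: "d > 2" and q: "q > 0" and tw: "is_twist f" and ge: "lexp f \<ge> 1"
  shows "finite (tw_supp (Tflat d q f))" "\<And>\<epsilon>. \<epsilon> \<in> tw_supp (Tflat d q f) \<Longrightarrow> 0 \<le> \<epsilon> \<and> \<epsilon> < 1"
proof -
  have "1 / d < 1" using d by simp
  with ge have gt: "lexp f > 1/d" by linarith
  have "lexp f * (d - 1) \<ge> 1 * (d - 1)" using ge d by (intro mult_right_mono) auto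
  then have "d * lexp f - 1 > lexp f" using d by (simp add: algebra_simps)
  then have "lexp f / (d * lexp f - 1) < 1" using ge by simp
  with Tflat_supp_bounded[OF _ q tw gt] d
  show "finite (tw_supp (Tflat d q f))" "\<And>\<epsilon>. \<epsilon> \<in> tw_supp (Tflat d q f) \<Longrightarrow> 0 \<le> \<epsilon> \<and> \<epsilon> < 1"
    by fastforce+
qed

section \<open>Shifts and the chain\<close>

lemma shift_is_twist_lexp:
  assumes fin: "finite (tw_supp c)" and small: "\<forall>\<kappa>\<in>tw_supp c. 0 \<le> \<kappa> \<and> \<kappa> < real (degree P)"
    and deg: "degree P \<ge> 1"
  shows "is_twist (shift P c)" "lexp (shift P c) = real (degree P)"
proof -
  have sub: "tw_supp (shift P c) \<subseteq> tw_supp c \<union> real ` {..degree P}"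
  proof
    fix \<kappa> assume \<kappa>: "\<kappa> \<in> tw_supp (shift P c)"
    show "\<kappa> \<in> tw_supp c \<union> real ` {..degree P}"
    proof (cases "c \<kappa> = 0")
      case True
      with \<kappa> have "\<kappa> \<in> \<nat>" and "coeff P (nat \<lfloor>\<kappa>\<rfloor>) \<noteq> 0"
        by (auto simp: tw_supp_def shift_def split: if_splits)
      then obtain n where "\<kappa> = real n" "coeff P n \<noteq> 0" by (auto elim: Nats_cases)
      then show ?thesis using le_degree by auto
    qed (simp add: tw_supp_def)
  qed
  have fin': "finite (tw_supp (shift P c))" by (rule finite_subset[OF sub]) (simp add: fin)
  have top: "real (degree P) \<in> tw_supp (shift P c)"
  proof -
    have "c (real (degree P)) = 0" using small by (auto simp: tw_supp_def)
    moreover have "coeff P (degree P) \<noteq> 0" using deg by auto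
    ultimately show ?thesis by (simp add: tw_supp_def shift_def)
  qed
  have bounds: "0 \<le> \<kappa> \<and> \<kappa> \<le> real (degree P)" if "\<kappa> \<in> tw_supp (shift P c)" for \<kappa>
    using sub that small by fastforce
  show "is_twist (shift P c)" unfolding is_twist_def using fin' top bounds by auto
  show "lexp (shift P c) = real (degree P)"
    unfolding lexp_def using fin' top bounds by (intro Max_eqI) auto
qed

lemma twchain_is_twist_lexp:
  assumes d: "d > 2" and q: "q > 0" and f0: "is_twist f0" "lexp f0 < 1"
    and deg: "\<forall>j\<in>{1..k}. degree (P j) \<ge> 1"
  shows "1 \<le> j \<Longrightarrow> j \<le> k \<Longrightarrow>
    is_twist (twchain d q f0 P j) \<and> lexp (twchain d q f0 P j) = real (degree (P j))"
proof (induction j)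
  case (Suc j)
  have deg_j: "degree (P (Suc j)) \<ge> 1" using deg Suc.prems by auto
  show ?case
  proof (cases "j = 0")
    case True
    have "\<forall>\<kappa>\<in>tw_supp f0. 0 \<le> \<kappa> \<and> \<kappa> < real (degree (P 1))"
      using f0 deg_j True le_lexp twist_supp_nonneg by fastforce
    with shift_is_twist_lexp[OF twist_finite_supp[OF f0(1)]] deg_j True show ?thesis by simp
  next
    case False
    then have "is_twist (twchain d q f0 P j)" "lexp (twchain d q f0 P j) \<ge> 1"
      using Suc deg by auto
    note T = Tflat_supp_less_1[OF d q this]
    have "\<forall>\<epsilon>\<in>tw_supp (Tflat d q (twchain d q f0 P j)). 0 \<le> \<epsilon> \<and> \<epsilon> < real (degree (P (Suc j)))"
      using T(2) deg_j by fastforce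
    with shift_is_twist_lexp[OF T(1)] deg_j False show ?thesis by simp
  qed
qed simp

lemma sel_q_pos:
  assumes "ext_selberg a F Q r lam mu w" "sel_degree r lam > 0"
  shows "sel_q Q r lam > 0"
proof -
  have "Q > 0" "\<forall>j<r. lam j > 0" using assms(1) unfolding ext_selberg_def by auto
  moreover from this have "(\<Prod>j<r. lam j powr (2 * lam j)) > 0" by (intro prod_pos) auto
  ultimately have "sel_conductor Q r lam > 0" by (simp add: sel_conductor_def)
  then show ?thesis using assms(2) by (simp add: sel_q_def)
qed

theorem fact1:
  fixes a :: "nat \<Rightarrow> complex" and F :: "complex \<Rightarrow> complex" and Q :: real and r :: nat
    and lam :: "nat \<Rightarrow> real" and mu :: "nat \<Rightarrow> complex" and w :: complex
    and f0 :: "real \<Rightarrow> real" and P :: "nat \<Rightarrow> int poly" and k :: nat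
  assumes "ext_selberg a F Q r lam mu w"
    and "sel_degree r lam > 2"
    and "is_twist f0" and "0 \<le> lexp f0" and "lexp f0 \<le> 1 / sel_degree r lam"
    and "\<forall>j\<in>{1..k}. degree (P j) \<ge> 1"
  shows "(\<forall>j\<in>{1..<k}. Tflat_defined (sel_degree r lam) (sel_q Q r lam)
                         (twchain (sel_degree r lam) (sel_q Q r lam) f0 P j))
       \<and> (\<forall>j\<in>{1..k}. is_twist (twchain (sel_degree r lam) (sel_q Q r lam) f0 P j)
                    \<and> lexp (twchain (sel_degree r lam) (sel_q Q r lam) f0 P j) = real (degree (P j)))
       \<and> (\<forall>j\<in>{1..k}. lexp (twchain (sel_degree r lam) (sel_q Q r lam) f0 P j) > 1 / sel_degree r lam)"
proof -
  define d where "d = sel_degree r lam"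
  define q where "q = sel_q Q r lam"
  have d: "d > 2" using assms(2) by (simp add: d_def)
  have "q > 0" using sel_q_pos[OF assms(1)] d by (simp add: q_def d_def)
  have "1 / d < 1" using d by simp
  with assms(5) have "lexp f0 < 1" by (simp add: d_def)
  have chain: "is_twist (twchain d q f0 P j) \<and> lexp (twchain d q f0 P j) = real (degree (P j))"
    if "j \<in> {1..k}" for j
    using twchain_is_twist_lexp[OF d \<open>q > 0\<close> assms(3) \<open>lexp f0 < 1\<close> assms(6)] that by simp
  have gt: "lexp (twchain d q f0 P j) > 1 / d" if "j \<in> {1..k}" for j
    using chain[OF that] assms(6) that \<open>1 / d < 1\<close> by fastforce
  have "Tflat_defined d q (twchain d q f0 P j)" if "j \<in> {1..<k}" for j
    using that d \<open>q > 0\<close> chain gt by (intro Tflat_defined_if_lexp_gt) auto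
  then show ?thesis
    unfolding d_def[symmetric] q_def[symmetric] using chain gt by blast
qed

end
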